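(* Let $P$ be a finite abelian $p$-group. Then $\mathrm{Perf}(\mathcal{O}P)\cong \mathrm{Aut}(\mathcal{O}P)\times C_2$.
   Context: $(K,\mathcal{O},k)$ is a $p$-modular system with $k$ algebraically closed of characteristic $p$. For a block $B$, $\mathrm{Perf}(B)$ is the group (under composition) of perfect self-isometries of $B$ in the sense of Broué: isometries $I:\mathbb{Z}\mathrm{Irr}(B)\to\mathbb{Z}\mathrm{Irr}(B)$ whose associated generalized character $\mu(g,h)=\sum_{\chi}I(\chi)(g)\chi(h^{-1})$ is perfect. $\mathrm{Aut}(\mathcal{O}P)$ is the group of $\mathcal{O}$-algebra automorphisms of $\mathcal{O}P$. *)

theory Defs
  imports "HOL-Algebra.Algebra"
begin

text \<open>K is the type 'k (a field of characteristic 0), equipped with a discrete valuation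
  v (defined on nonzero elements, surjective onto the integers), complete with respect to v.
  \<O> is its valuation ring, and the residue field k = \<O>/m is algebraically closed of
  characteristic p.\<close>

definition p_modular_system :: "nat \<Rightarrow> ('k::field_char_0 \<Rightarrow> int) \<Rightarrow> 'k set \<Rightarrow> bool" where
  "p_modular_system p v \<O> \<longleftrightarrow>
     Factorial_Ring.prime p \<and>
     (\<forall>x y. x \<noteq> 0 \<longrightarrow> y \<noteq> 0 \<longrightarrow> v (x * y) = v x + v y) \<and>
     (\<forall>x y. x \<noteq> 0 \<longrightarrow> y \<noteq> 0 \<longrightarrow> x + y \<noteq> 0 \<longrightarrow> v (x + y) \<ge> min (v x) (v y)) \<and>
     (\<exists>\<pi>. \<pi> \<noteq> 0 \<and> v \<pi> = 1) \<and>
     \<O> = {x. x = 0 \<or> v x \<ge> 0} \<and>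
     (\<forall>(xs :: nat \<Rightarrow> 'k).
        (\<forall>N. \<exists>M. \<forall>m\<ge>M. \<forall>n\<ge>M. xs m = xs n \<or> v (xs m - xs n) \<ge> N) \<longrightarrow>
        (\<exists>L. \<forall>N. \<exists>M. \<forall>n\<ge>M. xs n = L \<or> v (xs n - L) \<ge> N)) \<and>
     v (of_nat p) > 0 \<and>
     (\<forall>(c :: nat \<Rightarrow> 'k) n. n \<ge> 1 \<longrightarrow> (\<forall>i<n. c i \<in> \<O>) \<longrightarrow>
        (\<exists>a\<in>\<O>. let f = a ^ n + (\<Sum>i<n. c i * a ^ i) in f = 0 \<or> v f > 0))"

definition centralizer_grp :: "('g, 'b) monoid_scheme \<Rightarrow> 'g \<Rightarrow> 'g set" where
  "centralizer_grp G g = {h \<in> carrier G. h \<otimes>\<^bsub>G\<^esub> g = g \<otimes>\<^bsub>G\<^esub> h}"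

definition p_regular :: "nat \<Rightarrow> ('g, 'b) monoid_scheme \<Rightarrow> 'g \<Rightarrow> bool" where
  "p_regular p G g \<longleftrightarrow> coprime (group.ord G g) p"

text \<open>For an abelian group with K a splitting field, the irreducible K-characters are
  exactly the linear characters (homomorphisms into K^*). Class functions are extended by 0
  outside the carrier.\<close>

definition lin_chars :: "('g, 'b) monoid_scheme \<Rightarrow> ('g \<Rightarrow> 'k::field) set" where
  "lin_chars G = {\<chi>. (\<forall>x\<in>carrier G. \<forall>y\<in>carrier G. \<chi> (x \<otimes>\<^bsub>G\<^esub> y) = \<chi> x * \<chi> y)
                    \<and> \<chi> \<one>\<^bsub>G\<^esub> = 1 \<and> (\<forall>x. x \<notin> carrier G \<longrightarrow> \<chi> x = 0)}"

definition ZIrr :: "('g, 'b) monoid_scheme \<Rightarrow> ('g \<Rightarrow> 'k::field) set" where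
  "ZIrr G = {f. \<exists>a :: ('g \<Rightarrow> 'k) \<Rightarrow> int.
               f = (\<lambda>x. \<Sum>\<chi>\<in>lin_chars G. of_int (a \<chi>) * \<chi> x)}"

definition char_inner :: "('g, 'b) monoid_scheme \<Rightarrow> ('g \<Rightarrow> 'k::field) \<Rightarrow> ('g \<Rightarrow> 'k) \<Rightarrow> 'k" where
  "char_inner G \<alpha> \<beta> = (\<Sum>g\<in>carrier G. \<alpha> g * \<beta> (inv\<^bsub>G\<^esub> g)) / of_nat (order G)"

definition mu_of :: "('g, 'b) monoid_scheme \<Rightarrow> (('g \<Rightarrow> 'k::field) \<Rightarrow> ('g \<Rightarrow> 'k)) \<Rightarrow> 'g \<Rightarrow> 'g \<Rightarrow> 'k" where
  "mu_of G I g h = (\<Sum>\<chi>\<in>lin_chars G. I \<chi> g * \<chi> (inv\<^bsub>G\<^esub> h))"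

text \<open>Broue's perfectness for a generalized character of G x G (here G = H = P).\<close>
definition perfect :: "nat \<Rightarrow> 'k::field set \<Rightarrow> ('g, 'b) monoid_scheme \<Rightarrow> ('g \<Rightarrow> 'g \<Rightarrow> 'k) \<Rightarrow> bool" where
  "perfect p \<O> G \<mu> \<longleftrightarrow>
     (\<forall>g\<in>carrier G. \<forall>h\<in>carrier G.
        \<mu> g h / of_nat (card (centralizer_grp G g)) \<in> \<O> \<and>
        \<mu> g h / of_nat (card (centralizer_grp G h)) \<in> \<O>) \<and>
     (\<forall>g\<in>carrier G. \<forall>h\<in>carrier G. \<mu> g h \<noteq> 0 \<longrightarrow>
        (p_regular p G g \<longleftrightarrow> p_regular p G h))"

definition perf_isometries :: "nat \<Rightarrow> 'k::field set \<Rightarrow> ('g, 'b) monoid_scheme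
    \<Rightarrow> (('g \<Rightarrow> 'k) \<Rightarrow> ('g \<Rightarrow> 'k)) set" where
  "perf_isometries p \<O> G = {I. I \<in> extensional (ZIrr G) \<and>
      bij_betw I (ZIrr G) (ZIrr G) \<and>
      (\<forall>\<alpha>\<in>ZIrr G. \<forall>\<beta>\<in>ZIrr G. I (\<lambda>x. \<alpha> x + \<beta> x) = (\<lambda>x. I \<alpha> x + I \<beta> x)) \<and>
      (\<forall>\<alpha>\<in>ZIrr G. \<forall>\<beta>\<in>ZIrr G. char_inner G (I \<alpha>) (I \<beta>) = char_inner G \<alpha> \<beta>) \<and>
      perfect p \<O> G (mu_of G I)}"

definition Perf :: "nat \<Rightarrow> 'k::field set \<Rightarrow> ('g, 'b) monoid_scheme
    \<Rightarrow> (('g \<Rightarrow> 'k) \<Rightarrow> ('g \<Rightarrow> 'k)) monoid" where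
  "Perf p \<O> G = \<lparr>carrier = perf_isometries p \<O> G,
                 monoid.mult = (\<lambda>I J. compose (ZIrr G) I J),
                 monoid.one = restrict id (ZIrr G)\<rparr>"

definition grp_alg :: "'k::field set \<Rightarrow> ('g, 'b) monoid_scheme \<Rightarrow> ('g \<Rightarrow> 'k) set" where
  "grp_alg \<O> G = {a. (\<forall>x\<in>carrier G. a x \<in> \<O>) \<and> (\<forall>x. x \<notin> carrier G \<longrightarrow> a x = 0)}"

definition grp_alg_mult :: "('g, 'b) monoid_scheme \<Rightarrow> ('g \<Rightarrow> 'k::field) \<Rightarrow> ('g \<Rightarrow> 'k) \<Rightarrow> ('g \<Rightarrow> 'k)" where
  "grp_alg_mult G a b = (\<lambda>x. if x \<in> carrier G
       then (\<Sum>y\<in>carrier G. a y * b (inv\<^bsub>G\<^esub> y \<otimes>\<^bsub>G\<^esub> x)) else 0)"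

definition grp_alg_one :: "('g, 'b) monoid_scheme \<Rightarrow> ('g \<Rightarrow> 'k::field)" where
  "grp_alg_one G = (\<lambda>x. if x = \<one>\<^bsub>G\<^esub> then 1 else 0)"

definition alg_auts :: "'k::field set \<Rightarrow> ('g, 'b) monoid_scheme \<Rightarrow> (('g \<Rightarrow> 'k) \<Rightarrow> ('g \<Rightarrow> 'k)) set" where
  "alg_auts \<O> G = {\<phi>. \<phi> \<in> extensional (grp_alg \<O> G) \<and>
      bij_betw \<phi> (grp_alg \<O> G) (grp_alg \<O> G) \<and>
      (\<forall>a\<in>grp_alg \<O> G. \<forall>b\<in>grp_alg \<O> G. \<phi> (\<lambda>x. a x + b x) = (\<lambda>x. \<phi> a x + \<phi> b x)) \<and>
      (\<forall>c\<in>\<O>. \<forall>a\<in>grp_alg \<O> G. \<phi> (\<lambda>x. c * a x) = (\<lambda>x. c * \<phi> a x)) \<and>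
      (\<forall>a\<in>grp_alg \<O> G. \<forall>b\<in>grp_alg \<O> G.
          \<phi> (grp_alg_mult G a b) = grp_alg_mult G (\<phi> a) (\<phi> b)) \<and>
      \<phi> (grp_alg_one G) = grp_alg_one G}"

definition Aut_alg :: "'k::field set \<Rightarrow> ('g, 'b) monoid_scheme \<Rightarrow> (('g \<Rightarrow> 'k) \<Rightarrow> ('g \<Rightarrow> 'k)) monoid" where
  "Aut_alg \<O> G = \<lparr>carrier = alg_auts \<O> G,
                  monoid.mult = (\<lambda>\<phi> \<psi>. compose (grp_alg \<O> G) \<phi> \<psi>),
                  monoid.one = restrict id (grp_alg \<O> G)\<rparr>"

definition C2 :: "int monoid" where
  "C2 = \<lparr>carrier = {1, -1}, monoid.mult = (*), monoid.one = 1\<rparr>"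

end

theory Submission
  imports Defs "HOL-Computational_Algebra.Polynomial"
begin

text \<open>Since \<open>P\<close> is abelian and \<open>K\<close> contains a primitive \<open>|P|\<close>-th root of unity, \<open>Irr(P)\<close> is the
  group of linear characters, and the Fourier transform identifies \<open>KP\<close> with the algebra of
  functions on \<open>Irr(P)\<close>; so \<open>K\<close>-algebra automorphisms of \<open>KP\<close> are dual to permutations of
  \<open>Irr(P)\<close>. A perfect isometry \<open>I\<close> is an isometry of \<open>\<int>Irr(P)\<close>, so it maps every character
  \<open>\<chi>\<close> to \<open>\<epsilon>\<^sub>\<chi> \<sigma>(\<chi>)\<close> with \<open>\<epsilon>\<^sub>\<chi> = \<plusminus>1\<close> and \<open>\<sigma>\<close> a permutation of \<open>Irr(P)\<close>. As \<open>1\<close> is the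
  only \<open>p\<close>-regular element of \<open>P\<close>, perfectness forces \<open>\<mu>(1, h) = 0\<close> for \<open>h \<noteq> 1\<close>, which makes
  \<open>\<epsilon>\<close> constant; the integrality condition \<open>\<mu>(g, h) / |P| \<in> \<O>\<close> says exactly that the
  automorphism of \<open>KP\<close> dual to \<open>\<sigma>\<close> preserves \<open>\<O>P\<close>. Conversely, every \<open>\<alpha> \<in> Aut(\<O>P)\<close> permutes
  \<open>Irr(P)\<close> by \<open>\<chi> \<mapsto> \<chi> \<circ> \<alpha>\<close>, and \<open>\<plusminus>(\<chi> \<mapsto> \<chi> \<circ> \<alpha>)\<close> is perfect because its \<open>\<mu>(g, h)\<close> is
  \<open>\<plusminus>|P|\<close> times the coefficient of \<open>h\<close> in \<open>\<alpha>(g)\<close>. Hence \<open>I \<mapsto> (\<alpha>, \<epsilon>)\<close> is an isomorphism.\<close>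

hide_const (open) Polynomial.order

section \<open>Roots of unity\<close>

lemma roots_of_unity_finite_card_le:
  assumes "n \<ge> 1"
  shows "finite {z::'a::field. z ^ n = 1} \<and> card {z::'a. z ^ n = 1} \<le> n"
proof -
  define q :: "'a poly" where "q = monom 1 n + [:-1:]"
  have deg: "degree q = n"
    using assms unfolding q_def by (subst degree_add_eq_left) (auto simp: degree_monom_eq)
  then have "q \<noteq> 0" using assms by auto
  moreover have "{z. z ^ n = 1} = {z. poly q z = 0}" by (auto simp: q_def poly_monom)
  ultimately show ?thesis using poly_roots_finite[of q] card_poly_roots_bound[of q] deg by simp
qed

lemma root_of_unity_eq_power_of_primitive:
  fixes \<zeta> c :: "'a::field"
  assumes m: "m \<ge> 1" and \<zeta>_root: "\<zeta> ^ m = 1" and \<zeta>_prim: "\<forall>k. 0 < k \<longrightarrow> k < m \<longrightarrow> \<zeta> ^ k \<noteq> 1"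
    and c: "c ^ m = 1"
  shows "\<exists>i<m. c = \<zeta> ^ i"
proof -
  have "\<zeta> \<noteq> 0" using \<zeta>_root m by (cases m) auto
  have less_imp_ne: "\<zeta> ^ i \<noteq> \<zeta> ^ j" if "i < j" "j < m" for i j
  proof
    assume "\<zeta> ^ i = \<zeta> ^ j"
    moreover have "\<zeta> ^ j = \<zeta> ^ i * \<zeta> ^ (j - i)" using \<open>i < j\<close> by (simp flip: power_add)
    ultimately have "\<zeta> ^ (j - i) = 1" using \<open>\<zeta> \<noteq> 0\<close> by simp
    then show False using \<zeta>_prim that by simp
  qed
  have inj: "inj_on (\<lambda>i. \<zeta> ^ i) {..<m}"
    by (rule inj_onI) (metis lessThan_iff less_imp_ne linorder_neqE_nat)
  have "(\<zeta> ^ i) ^ m = 1" for i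
    by (metis \<zeta>_root mult.commute power_mult power_one)
  then have sub: "(\<lambda>i. \<zeta> ^ i) ` {..<m} \<subseteq> {z. z ^ m = 1}" by blast
  have fin: "finite {z::'a. z ^ m = 1}" and card: "card {z::'a. z ^ m = 1} \<le> m"
    using roots_of_unity_finite_card_le[OF m] by auto
  have "(\<lambda>i. \<zeta> ^ i) ` {..<m} = {z. z ^ m = 1}"
    using card_subset_eq[OF fin sub] card card_image[OF inj] card_mono[OF fin sub] by simp
  then show ?thesis using c by auto
qed

section \<open>Extending characters of subgroups\<close>

definition char_on :: "('g, 'b) monoid_scheme \<Rightarrow> 'g set \<Rightarrow> ('g \<Rightarrow> 'k::field) \<Rightarrow> bool" where
  "char_on G H \<chi> \<longleftrightarrow> (\<forall>x\<in>H. \<forall>y\<in>H. \<chi> (x \<otimes>\<^bsub>G\<^esub> y) = \<chi> x * \<chi> y) \<and> \<chi> \<one>\<^bsub>G\<^esub> = 1"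

context group
begin

lemma bij_betw_mult_left:
  assumes "h \<in> carrier G"
  shows "bij_betw (\<lambda>g. h \<otimes> g) (carrier G) (carrier G)"
  by (rule bij_betwI[where g = "\<lambda>g. inv h \<otimes> g"]) (use assms in \<open>auto simp: m_assoc[symmetric]\<close>)

lemma subgroup_nat_pow_closed:
  assumes "subgroup H G" "y \<in> H"
  shows "y [^] (k::nat) \<in> H"
  using assms by (induction k) (simp_all add: subgroup.one_closed subgroup.m_closed)

lemma char_on_nat_pow:
  assumes "subgroup H G" "char_on G H \<chi>" "y \<in> H"
  shows "\<chi> (y [^] (k::nat)) = \<chi> y ^ k"
proof (induction k)
  case 0 then show ?case using assms(2) by (simp add: char_on_def)
next
  case (Suc k)
  then show ?case
    using assms subgroup_nat_pow_closed[OF assms(1,3), of k] by (simp add: char_on_def)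
qed

lemma prime_dvd_if_pow_mem:
  assumes p: "Factorial_Ring.prime p" and H: "subgroup H G" and x: "x \<in> carrier G" "x \<notin> H"
    and xp: "x [^] p \<in> H" and xd: "x [^] d \<in> H"
  shows "p dvd (d::nat)"
proof (rule ccontr)
  assume "\<not> p dvd d"
  define r where "r = d mod p"
  have "r \<noteq> 0" using \<open>\<not> p dvd d\<close> by (simp add: r_def mod_eq_0_iff_dvd)
  have "x [^] d = x [^] r \<otimes> (x [^] p) [^] (d div p)"
    using x by (simp only: r_def nat_pow_pow nat_pow_mult mod_mult_div_eq)
  then have "x [^] r = x [^] d \<otimes> inv ((x [^] p) [^] (d div p))"
    using x by (simp add: m_assoc)
  then have xr: "x [^] r \<in> H"
    using xd subgroup_nat_pow_closed[OF H xp] H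
    by (metis subgroup.m_closed subgroup.m_inv_closed)
  have "r < p" using p by (simp add: r_def prime_gt_0_nat)
  then have "\<not> p dvd r"
    using \<open>r \<noteq> 0\<close> by (auto dest: dvd_imp_le)
  then have "coprime r p"
    using p prime_imp_coprime coprime_commute by blast
  then obtain a b where ab: "r * a = p * b + 1"
    using bezout_nat[of r p] \<open>r \<noteq> 0\<close> by auto
  have "(x [^] r) [^] a = (x [^] p) [^] b \<otimes> x"
  proof -
    have "(x [^] r) [^] a = x [^] (p * b) \<otimes> x [^] (1::nat)"
      using x by (simp only: nat_pow_pow ab nat_pow_mult)
    then show ?thesis using x by (simp add: nat_pow_pow)
  qed
  then have "x = inv ((x [^] p) [^] b) \<otimes> (x [^] r) [^] a"
    using x by (simp add: m_assoc[symmetric])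
  then have "x \<in> H"
    using subgroup_nat_pow_closed[OF H xp] subgroup_nat_pow_closed[OF H xr] H
    by (metis subgroup.m_closed subgroup.m_inv_closed)
  then show False using x by blast
qed

lemma char_on_extension_well_defined:
  assumes p: "Factorial_Ring.prime p" and H: "subgroup H G" and l: "char_on G H l"
    and x: "x \<in> carrier G" "x \<notin> H" and xp: "x [^] p \<in> H" and \<omega>: "\<omega> ^ p = l (x [^] p)"
    and h: "h \<in> H" "h' \<in> H" and eq: "h \<otimes> x [^] (i::nat) = h' \<otimes> x [^] (j::nat)"
  shows "l h * \<omega> ^ i = l h' * \<omega> ^ j"
proof -
  have le_case: "l h * \<omega> ^ i = l h' * \<omega> ^ j"
    if h: "h \<in> H" "h' \<in> H" and eq: "h \<otimes> x [^] (i::nat) = h' \<otimes> x [^] (j::nat)" and "j \<le> i"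
    for h h' i j
  proof -
    define d where "d = i - j"
    have hc: "h \<in> carrier G" "h' \<in> carrier G" using h H subgroup.subset by blast+
    have i: "i = d + j" using \<open>j \<le> i\<close> by (simp add: d_def)
    have "(h \<otimes> x [^] d) \<otimes> x [^] j = h' \<otimes> x [^] j"
      using eq x hc by (simp add: i nat_pow_mult[symmetric] m_assoc)
    then have hd: "h \<otimes> x [^] d = h'" using x hc by (metis m_closed nat_pow_closed right_cancel)
    then have "x [^] d = inv h \<otimes> h'" using hc x by (metis inv_solve_left' nat_pow_closed)
    then have "x [^] d \<in> H" using h H by (metis subgroup.m_closed subgroup.m_inv_closed)
    then obtain q where d: "d = p * q" using prime_dvd_if_pow_mem[OF p H x xp] by blast
    have "l (x [^] d) = l ((x [^] p) [^] q)" using x by (simp only: d nat_pow_pow)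
    also have "\<dots> = \<omega> ^ d" using char_on_nat_pow[OF H l xp] \<omega> by (simp add: d power_mult)
    finally have "l (x [^] d) = \<omega> ^ d" .
    moreover have "l h' = l h * l (x [^] d)"
      using l h \<open>x [^] d \<in> H\<close> hd unfolding char_on_def by metis
    ultimately show ?thesis by (simp add: i power_add mult.assoc)
  qed
  show ?thesis
  proof (cases "j \<le> i")
    case True then show ?thesis using le_case[OF h eq] by blast
  next
    case False then show ?thesis using le_case[OF h(2,1) eq[symmetric]] by simp
  qed
qed

lemma char_on_extension_fun:
  assumes p: "Factorial_Ring.prime p" and H: "subgroup H G" and l: "char_on G H l"
    and x: "x \<in> carrier G" "x \<notin> H" and xp: "x [^] p \<in> H" and \<omega>: "\<omega> ^ p = l (x [^] p)"
  shows "\<exists>l'. \<forall>h\<in>H. \<forall>i::nat. l' (h \<otimes> x [^] i) = l h * \<omega> ^ i"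
proof -
  define l' where "l' y = (SOME v. \<exists>h\<in>H. \<exists>i. y = h \<otimes> x [^] (i::nat) \<and> v = l h * \<omega> ^ i)" for y
  have "l' (h \<otimes> x [^] (i::nat)) = l h * \<omega> ^ i" if "h \<in> H" for h i
  proof -
    have "\<exists>h'\<in>H. \<exists>j. h \<otimes> x [^] i = h' \<otimes> x [^] (j::nat) \<and> l' (h \<otimes> x [^] i) = l h' * \<omega> ^ j"
      unfolding l'_def by (rule someI_ex) (use that in blast)
    then show ?thesis
      using char_on_extension_well_defined[OF p H l x xp \<omega> that] by metis
  qed
  then show ?thesis by blast
qed

end

context comm_group
begin

lemma mult_pow_mult_mult_pow:
  assumes "h \<in> carrier G" "h' \<in> carrier G" "x \<in> carrier G"
  shows "(h \<otimes> x [^] (i::nat)) \<otimes> (h' \<otimes> x [^] (j::nat)) = (h \<otimes> h') \<otimes> x [^] (i + j)"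
  using assms by (simp add: m_ac nat_pow_mult[symmetric])

lemma subgroup_mult_nat_powers:
  assumes fin: "finite (carrier G)" and H: "subgroup H G" and x: "x \<in> carrier G"
  shows "subgroup {h \<otimes> x [^] (i::nat) | h i. h \<in> H} G" (is "subgroup ?H' G")
proof -
  have memI: "h \<otimes> x [^] (i::nat) \<in> ?H'" if "h \<in> H" for h i using that by blast
  have hc: "h \<in> carrier G" if "h \<in> H" for h using that H subgroup.subset by blast
  show ?thesis
  proof (rule subgroupI)
    show "?H' \<noteq> {}" using memI[OF subgroup.one_closed[OF H]] by blast
    show "?H' \<subseteq> carrier G" using hc x by blast
  next
    fix a assume "a \<in> ?H'"
    then obtain h i where a: "a = h \<otimes> x [^] (i::nat)" and h: "h \<in> H" by blast
    have "order G > 0" using fin by (simp add: order_gt_0_iff_finite)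
    then have exp: "i * (order G - 1) + i = order G * i"
      by (cases "order G") (auto simp: algebra_simps)
    have "(inv h \<otimes> x [^] (i * (order G - 1))) \<otimes> a = (inv h \<otimes> h) \<otimes> x [^] (order G * i)"
      using hc[OF h] x by (simp only: a mult_pow_mult_mult_pow inv_closed exp)
    also have "\<dots> = \<one>" using hc[OF h] x by (simp add: nat_pow_pow[symmetric] pow_order_eq_1)
    finally have "inv a = inv h \<otimes> x [^] (i * (order G - 1))"
      using a hc[OF h] x by (intro inv_equality) auto
    then show "inv a \<in> ?H'" using memI[OF subgroup.m_inv_closed[OF H h]] by simp
  next
    fix a b assume "a \<in> ?H'" "b \<in> ?H'"
    then obtain h i h' j
      where "a = h \<otimes> x [^] (i::nat)" "h \<in> H" "b = h' \<otimes> x [^] (j::nat)" "h' \<in> H"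
      by blast
    then show "a \<otimes> b \<in> ?H'"
      using memI[OF subgroup.m_closed[OF H]] hc x by (simp add: mult_pow_mult_mult_pow)
  qed
qed

lemma char_on_extend_prime:
  assumes fin: "finite (carrier G)" and p: "Factorial_Ring.prime p"
    and H: "subgroup H G" and l: "char_on G H l"
    and x: "x \<in> carrier G" "x \<notin> H" and xp: "x [^] p \<in> H" and \<omega>: "\<omega> ^ p = l (x [^] p)"
  shows "\<exists>H' l'. subgroup H' G \<and> H \<subseteq> H' \<and> x \<in> H' \<and> char_on G H' l'
                \<and> (\<forall>h\<in>H. l' h = l h) \<and> l' x = \<omega>"
proof -
  define H' where "H' = {h \<otimes> x [^] (i::nat) | h i. h \<in> H}"
  obtain l' where l'_eq: "\<And>h i. h \<in> H \<Longrightarrow> l' (h \<otimes> x [^] (i::nat)) = l h * \<omega> ^ i"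
    using char_on_extension_fun[OF p H l x xp \<omega>] by blast
  have hc: "h \<in> carrier G" if "h \<in> H" for h using that H subgroup.subset by blast
  have H'_sub: "subgroup H' G" unfolding H'_def by (rule subgroup_mult_nat_powers[OF fin H x(1)])
  have H_H': "H \<subseteq> H'"
  proof
    fix h assume "h \<in> H"
    then have "h = h \<otimes> x [^] (0::nat)" using hc by simp
    with \<open>h \<in> H\<close> show "h \<in> H'" unfolding H'_def by blast
  qed
  have "x = \<one> \<otimes> x [^] (1::nat)" using x by simp
  with subgroup.one_closed[OF H] have x_H': "x \<in> H'" unfolding H'_def by blast
  have l'_H: "l' h = l h" if "h \<in> H" for h
    using l'_eq[OF that, of 0] hc[OF that] by simp
  have l'_one: "l' \<one> = 1"
    using l'_H H l subgroup.one_closed by (fastforce simp: char_on_def)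
  have l'_mult: "l' (a \<otimes> b) = l' a * l' b" if ab: "a \<in> H'" "b \<in> H'" for a b
  proof -
    obtain h i where a: "a = h \<otimes> x [^] (i::nat)" "h \<in> H"
      using ab(1) unfolding H'_def by blast
    obtain h' j where b: "b = h' \<otimes> x [^] (j::nat)" "h' \<in> H"
      using ab(2) unfolding H'_def by blast
    have hh': "h \<otimes> h' \<in> H" using H a(2) b(2) by (rule subgroup.m_closed)
    have "l' (a \<otimes> b) = l' ((h \<otimes> h') \<otimes> x [^] (i + j))"
      using a b hc x(1) by (simp only: mult_pow_mult_mult_pow)
    also have "\<dots> = (l h * \<omega> ^ i) * (l h' * \<omega> ^ j)"
      using l'_eq[OF hh'] l a(2) b(2) by (simp add: char_on_def power_add mult_ac)
    finally show ?thesis using a b l'_eq by simp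
  qed
  have "l' x = \<omega>"
    using l'_eq[of \<one> 1] l'_H H l x(1) subgroup.one_closed by (fastforce simp: char_on_def)
  then show ?thesis
    using H'_sub H_H' x_H' l'_mult l'_one l'_H unfolding char_on_def
    by (intro exI[of _ H'] exI[of _ l']) simp
qed

lemma centralizer_eq_carrier: "g \<in> carrier G \<Longrightarrow> centralizer_grp G g = carrier G"
  by (auto simp: centralizer_grp_def m_comm)

end

lemma char_inner_scale: "char_inner G (\<lambda>x. c * f x) (\<lambda>x. d * f' x) = c * d * char_inner G f f'"
  by (simp add: char_inner_def sum_distrib_left sum_divide_distrib mult_ac)

section \<open>Characters of a finite abelian p-group\<close>

locale split_abelian_p_group = comm_group G for G :: "('g, 'b) monoid_scheme" (structure) +
  fixes p N :: nat and \<zeta> :: "'k::field_char_0"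
  assumes finite_carrier: "finite (carrier G)" and prime_p: "Factorial_Ring.prime p"
    and order_eq: "order G = p ^ N"
    and root_order: "\<zeta> ^ order G = 1"
    and root_primitive: "\<forall>k. 0 < k \<longrightarrow> k < order G \<longrightarrow> \<zeta> ^ k \<noteq> 1"
begin

abbreviation n where "n \<equiv> order G"
abbreviation Irr where "Irr \<equiv> (lin_chars G :: ('g \<Rightarrow> 'k) set)"

lemma order_pos: "n > 0"
  using finite_carrier by (simp add: order_gt_0_iff_finite)

lemma prime_dvd_order:
  assumes "g \<in> carrier G" "g \<noteq> \<one>"
  shows "p dvd n"
proof -
  have "card {\<one>, g} \<le> card (carrier G)"
    using assms by (intro card_mono finite_carrier) auto
  then have "n \<noteq> 1" using assms by (simp add: Coset.order_def)
  then have "N \<noteq> 0" using order_eq by auto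
  then show ?thesis using order_eq by (simp add: dvd_power)
qed

lemma exists_pow_prime_power_step:
  assumes H: "subgroup H G" and y: "y \<in> carrier G" "y \<notin> H"
  shows "\<exists>k. y [^] (p ^ k) \<notin> H \<and> (y [^] (p ^ k)) [^] p \<in> H"
proof -
  have "y [^] (p ^ N) \<in> H"
    using y(1) order_eq pow_order_eq_1 subgroup.one_closed[OF H] by metis
  then have in_H: "y [^] (p ^ (LEAST k. y [^] (p ^ k) \<in> H)) \<in> H" by (rule LeastI)
  define k where "k = (LEAST k. y [^] (p ^ k) \<in> H) - 1"
  have "(LEAST k. y [^] (p ^ k) \<in> H) \<noteq> 0" using in_H y by (intro notI) simp
  then have Suc_k: "(LEAST k. y [^] (p ^ k) \<in> H) = Suc k" by (simp add: k_def)
  have "y [^] (p ^ k) \<notin> H" using not_less_Least[of k "\<lambda>k. y [^] (p ^ k) \<in> H"] Suc_k by simp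
  moreover have "(y [^] (p ^ k)) [^] p \<in> H"
    using in_H y(1) by (simp add: Suc_k nat_pow_pow mult.commute)
  ultimately show ?thesis by blast
qed

lemma exists_pth_root:
  assumes "p dvd n" and c: "c ^ (n div p) = 1"
  shows "\<exists>\<omega>. \<omega> ^ p = (c :: 'k)"
proof -
  have p: "p > 0" using prime_p by (simp add: prime_gt_0_nat)
  have m: "n div p \<ge> 1" using assms(1) order_pos by (auto elim!: dvdE)
  have "(\<zeta> ^ p) ^ (n div p) = 1" using assms(1) root_order by (simp flip: power_mult)
  moreover have "\<forall>k. 0 < k \<longrightarrow> k < n div p \<longrightarrow> (\<zeta> ^ p) ^ k \<noteq> 1"
  proof (intro allI impI)
    fix k assume k: "0 < k" "k < n div p"
    then have "p * k < n" using assms(1) p by (auto elim!: dvdE)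
    then show "(\<zeta> ^ p) ^ k \<noteq> 1" using root_primitive k p by (simp flip: power_mult)
  qed
  ultimately obtain i where "c = (\<zeta> ^ p) ^ i"
    using root_of_unity_eq_power_of_primitive[OF m _ _ c] by blast
  then have "(\<zeta> ^ i) ^ p = c" by (simp flip: power_mult add: mult.commute)
  then show ?thesis by blast
qed

lemma char_on_extend_to_carrier:
  fixes l :: "'g \<Rightarrow> 'k"
  assumes "subgroup H G" "char_on G H l"
  shows "\<exists>\<chi>. char_on G (carrier G) \<chi> \<and> (\<forall>h\<in>H. \<chi> h = l h)"
  using assms
proof (induction "card (carrier G) - card H" arbitrary: H l rule: less_induct)
  case less
  show ?case
  proof (cases "H = carrier G")
    case True then show ?thesis using less.prems by blast
  next
    case False
    then obtain y where "y \<in> carrier G" "y \<notin> H"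
      using subgroup.subset[OF less.prems(1)] by blast
    then obtain k where "y [^] (p ^ k) \<notin> H" "(y [^] (p ^ k)) [^] p \<in> H"
      using exists_pow_prime_power_step[OF less.prems(1)] by blast
    then obtain x where x: "x \<in> carrier G" "x \<notin> H" "x [^] p \<in> H"
      using \<open>y \<in> carrier G\<close> nat_pow_closed by blast
    have "p dvd n"
      using prime_dvd_order[OF x(1)] x(2) subgroup.one_closed[OF less.prems(1)] by blast
    have "l (x [^] p) ^ (n div p) = l ((x [^] p) [^] (n div p))"
      using char_on_nat_pow[OF less.prems x(3)] by simp
    also have "\<dots> = 1"
      using x(1) \<open>p dvd n\<close> less.prems(2) by (simp add: nat_pow_pow pow_order_eq_1 char_on_def)
    finally obtain \<omega> where "\<omega> ^ p = l (x [^] p)" using exists_pth_root[OF \<open>p dvd n\<close>] by blast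
    then obtain H' l' where H': "subgroup H' G" "H \<subseteq> H'" "x \<in> H'" "char_on G H' l'"
        and l': "\<forall>h\<in>H. l' h = l h"
      using char_on_extend_prime[OF finite_carrier prime_p less.prems x] by blast
    have "card H < card H'"
      using H'(2,3) x(2) finite_subset[OF subgroup.subset[OF H'(1)] finite_carrier]
      by (metis psubsetI psubset_card_mono)
    moreover have "card H' \<le> card (carrier G)"
      using subgroup.subset[OF H'(1)] finite_carrier card_mono by blast
    ultimately obtain \<chi> where "char_on G (carrier G) \<chi>" "\<forall>h\<in>H'. \<chi> h = l' h"
      using less.hyps[OF _ H'(1,4)] by (meson diff_less_mono2 order_less_le_trans)
    then show ?thesis using H'(2) l' by (intro exI[of _ \<chi>]) auto
  qed
qed

lemma lin_chars_separate:
  assumes g: "g \<in> carrier G" "g \<noteq> \<one>"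
  shows "\<exists>\<chi>\<in>Irr. \<chi> g \<noteq> 1"
proof -
  obtain k where x: "g [^] (p ^ k) \<noteq> \<one>" "(g [^] (p ^ k)) [^] p = \<one>"
    using exists_pow_prime_power_step[OF triv_subgroup g(1)] g(2) by auto
  define \<omega> where "\<omega> = \<zeta> ^ (n div p)"
  have "p dvd n" using prime_dvd_order[OF g] .
  then obtain m where m: "n = p * m" by blast
  then have "0 < m" "m < n" using order_pos prime_gt_1_nat[OF prime_p] by auto
  moreover have "n div p = m" using m prime_p by (simp add: prime_gt_0_nat)
  ultimately have "\<omega> \<noteq> 1" "\<omega> ^ p = 1"
    using root_primitive root_order m by (simp_all add: \<omega>_def mult.commute flip: power_mult)
  have "char_on G {\<one>} (\<lambda>_. 1 :: 'k)" by (simp add: char_on_def)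
  from char_on_extend_prime[OF finite_carrier prime_p triv_subgroup this, of "g [^] (p ^ k)" \<omega>]
  obtain H' l' where H': "subgroup H' G" "char_on G H' l'" "g [^] (p ^ k) \<in> H'"
      "l' (g [^] (p ^ k)) = \<omega>"
    using g(1) x \<open>\<omega> ^ p = 1\<close> by auto
  obtain \<chi> where \<chi>: "char_on G (carrier G) \<chi>" "\<forall>h\<in>H'. \<chi> h = l' h"
    using char_on_extend_to_carrier[OF H'(1,2)] by blast
  have "\<chi> g ^ (p ^ k) = \<omega>"
    using char_on_nat_pow[OF subgroup_self \<chi>(1) g(1), of "p ^ k"] \<chi>(2) H'(3,4) by simp
  then have "\<chi> g \<noteq> 1" using \<open>\<omega> \<noteq> 1\<close> by auto
  moreover have "(\<lambda>x. if x \<in> carrier G then \<chi> x else 0) \<in> Irr"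
    using \<chi>(1) unfolding lin_chars_def char_on_def by auto
  ultimately show ?thesis
    using g(1) by (intro bexI[of _ "\<lambda>x. if x \<in> carrier G then \<chi> x else 0"]) auto
qed

lemma lin_char_mult: "\<chi> \<in> Irr \<Longrightarrow> x \<in> carrier G \<Longrightarrow> y \<in> carrier G \<Longrightarrow> \<chi> (x \<otimes> y) = \<chi> x * \<chi> y"
  unfolding lin_chars_def by blast

lemma lin_char_one: "\<chi> \<in> Irr \<Longrightarrow> \<chi> \<one> = 1"
  unfolding lin_chars_def by blast

lemma lin_char_outside: "\<chi> \<in> Irr \<Longrightarrow> x \<notin> carrier G \<Longrightarrow> \<chi> x = 0"
  unfolding lin_chars_def by blast

lemma lin_char_inv_mult: "\<chi> \<in> Irr \<Longrightarrow> g \<in> carrier G \<Longrightarrow> \<chi> (inv g) * \<chi> g = 1"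
  using lin_char_mult[of \<chi> "inv g" g] lin_char_one[of \<chi>] by simp

lemma lin_char_mult_inv: "\<chi> \<in> Irr \<Longrightarrow> g \<in> carrier G \<Longrightarrow> \<chi> g * \<chi> (inv g) = 1"
  using lin_char_inv_mult by (simp add: mult.commute)

lemma lin_char_root_of_unity:
  assumes "\<chi> \<in> Irr" "g \<in> carrier G"
  shows "\<chi> g ^ n = 1"
proof -
  have "\<chi> (g [^] k) = \<chi> g ^ k" for k :: nat
    using assms by (induction k) (auto simp: lin_char_one lin_char_mult)
  from this[of n] show ?thesis using assms by (simp add: pow_order_eq_1 lin_char_one)
qed

lemma lin_char_times: "\<chi> \<in> Irr \<Longrightarrow> \<psi> \<in> Irr \<Longrightarrow> (\<lambda>x. \<chi> x * \<psi> x) \<in> Irr"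
  unfolding lin_chars_def by (auto simp: mult_ac)

lemma lin_char_conj:
  assumes "\<chi> \<in> Irr"
  shows "(\<lambda>x. if x \<in> carrier G then \<chi> (inv x) else 0) \<in> Irr"
proof -
  have "\<chi> (inv (x \<otimes> y)) = \<chi> (inv x) * \<chi> (inv y)" if "x \<in> carrier G" "y \<in> carrier G" for x y
    using that lin_char_mult[OF assms, of "inv x" "inv y"] by (simp add: inv_mult)
  then show ?thesis using lin_char_one[OF assms] unfolding lin_chars_def by simp
qed

lemma finite_Irr: "finite Irr"
proof -
  define R where "R = {z::'k. z ^ n = 1}"
  have "finite R"
    unfolding R_def using roots_of_unity_finite_card_le[where 'a = 'k, of n] order_pos by simp
  have "Irr \<subseteq> (\<lambda>f x. if x \<in> carrier G then f x else 0) ` (carrier G \<rightarrow>\<^sub>E R)"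
  proof
    fix \<chi> assume \<chi>: "\<chi> \<in> Irr"
    have "\<chi> = (\<lambda>x. if x \<in> carrier G then restrict \<chi> (carrier G) x else 0)"
      using lin_char_outside[OF \<chi>] by auto
    moreover have "restrict \<chi> (carrier G) \<in> carrier G \<rightarrow>\<^sub>E R"
      using lin_char_root_of_unity[OF \<chi>] by (auto simp: R_def)
    ultimately show "\<chi> \<in> (\<lambda>f x. if x \<in> carrier G then f x else 0) ` (carrier G \<rightarrow>\<^sub>E R)" by blast
  qed
  then show ?thesis
    using finite_PiE[OF finite_carrier, of "\<lambda>_. R"] \<open>finite R\<close>
    by (meson finite_imageI finite_subset)
qed

definition principal_char :: "'g \<Rightarrow> 'k" where
  "principal_char x = (if x \<in> carrier G then 1 else 0)"

lemma principal_char_Irr: "principal_char \<in> Irr"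
  unfolding lin_chars_def principal_char_def by auto

lemma lin_chars_orthogonality:
  assumes \<chi>: "\<chi> \<in> Irr" and \<psi>: "\<psi> \<in> Irr"
  shows "(\<Sum>g\<in>carrier G. \<chi> g * \<psi> (inv g)) = (if \<chi> = \<psi> then of_nat n else 0)"
proof (cases "\<chi> = \<psi>")
  case True
  then show ?thesis using lin_char_mult_inv[OF \<chi>] by (simp add: Coset.order_def)
next
  case False
  then obtain h where h: "h \<in> carrier G" "\<chi> h \<noteq> \<psi> h"
    using lin_char_outside[OF \<chi>] lin_char_outside[OF \<psi>] by (metis ext)
  define \<theta> where "\<theta> g = \<chi> g * \<psi> (inv g)" for g
  have "\<theta> h \<noteq> 1"
  proof
    assume "\<theta> h = 1"
    then have "\<chi> h * \<psi> (inv h) * \<psi> h = \<psi> h" by (simp add: \<theta>_def)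
    then show False using h lin_char_inv_mult[OF \<psi> h(1)] by (simp add: mult.assoc)
  qed
  have \<theta>_mult: "\<theta> (h \<otimes> g) = \<theta> h * \<theta> g" if "g \<in> carrier G" for g
    using h that by (simp add: \<theta>_def inv_mult lin_char_mult[OF \<chi>] lin_char_mult[OF \<psi>] mult_ac)
  \<comment> \<open>translation by h permutes the summands and multiplies the sum by \<open>\<theta> h \<noteq> 1\<close>\<close>
  have "(\<Sum>g\<in>carrier G. \<theta> g) = (\<Sum>g\<in>carrier G. \<theta> (h \<otimes> g))"
    using sum.reindex_bij_betw[OF bij_betw_mult_left[OF h(1)], of \<theta>] by simp
  also have "\<dots> = \<theta> h * (\<Sum>g\<in>carrier G. \<theta> g)" by (simp add: \<theta>_mult sum_distrib_left)
  finally have "(\<Sum>g\<in>carrier G. \<theta> g) * (\<theta> h - 1) = 0" by (simp add: algebra_simps)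
  then show ?thesis using \<open>\<theta> h \<noteq> 1\<close> False by (simp add: \<theta>_def)
qed

lemma sum_lin_chars:
  assumes g: "g \<in> carrier G"
  shows "(\<Sum>\<chi>\<in>Irr. \<chi> g) = (if g = \<one> then of_nat (card Irr) else 0)"
proof (cases "g = \<one>")
  case True then show ?thesis by (simp add: lin_char_one)
next
  case False
  obtain l where l: "l \<in> Irr" "l g \<noteq> 1" using lin_chars_separate[OF g False] by blast
  define l' where "l' = (\<lambda>x. if x \<in> carrier G then l (inv x) else 0)"
  have l': "l' \<in> Irr" unfolding l'_def by (rule lin_char_conj[OF l(1)])
  have l_l': "l x * l' x = (if x \<in> carrier G then 1 else 0)" for x
    using lin_char_mult_inv[OF l(1)] lin_char_outside[OF l(1)] by (simp add: l'_def)
  \<comment> \<open>multiplication by l permutes Irr\<close>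
  have "(\<Sum>\<chi>\<in>Irr. \<chi> g) = (\<Sum>\<chi>\<in>Irr. l g * \<chi> g)"
  proof (rule sum.reindex_bij_witness[where j = "\<lambda>\<chi> x. l' x * \<chi> x" and i = "\<lambda>\<chi> x. l x * \<chi> x"])
    fix \<chi> assume \<chi>: "\<chi> \<in> Irr"
    have cancel: "c x * (d x * \<chi> x) = \<chi> x"
          if "\<And>x. c x * d x = (if x \<in> carrier G then 1 else 0)" for c d x
      using that[of x] lin_char_outside[OF \<chi>, of x]
      by (cases "x \<in> carrier G") (simp_all add: mult.assoc[symmetric])
    show "(\<lambda>x. l x * (l' x * \<chi> x)) = \<chi>" "(\<lambda>x. l' x * (l x * \<chi> x)) = \<chi>"
      using cancel[of l l'] cancel[of l' l] l_l' by (auto simp: mult.commute)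
    show "(\<lambda>x. l' x * \<chi> x) \<in> Irr" "(\<lambda>x. l x * \<chi> x) \<in> Irr"
      using lin_char_times l l' \<chi> by blast+
    show "l g * (l' g * \<chi> g) = \<chi> g" using l_l'[of g] g by (simp add: mult.assoc[symmetric])
  qed
  also have "\<dots> = l g * (\<Sum>\<chi>\<in>Irr. \<chi> g)" by (simp add: sum_distrib_left)
  finally have "(\<Sum>\<chi>\<in>Irr. \<chi> g) * (l g - 1) = 0" by (simp add: algebra_simps)
  then show ?thesis using l(2) False by simp
qed

lemma card_Irr: "card Irr = n"
proof -
  have "(of_nat (card Irr) :: 'k) = (\<Sum>g\<in>carrier G. \<Sum>\<chi>\<in>Irr. \<chi> g)"
    using finite_carrier by (simp add: sum_lin_chars sum.delta cong: sum.cong)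
  also have "\<dots> = (\<Sum>\<chi>\<in>Irr. \<Sum>g\<in>carrier G. \<chi> g * principal_char (inv g))"
    by (subst sum.swap) (simp add: principal_char_def)
  also have "\<dots> = of_nat n"
    using finite_Irr principal_char_Irr by (simp add: lin_chars_orthogonality sum.delta)
  finally show ?thesis using of_nat_eq_iff by blast
qed

lemma lin_chars_column_orthogonality:
  assumes g: "g \<in> carrier G" and h: "h \<in> carrier G"
  shows "(\<Sum>\<chi>\<in>Irr. \<chi> g * \<chi> (inv h)) = (if g = h then of_nat n else 0)"
proof -
  have "(\<Sum>\<chi>\<in>Irr. \<chi> g * \<chi> (inv h)) = (\<Sum>\<chi>\<in>Irr. \<chi> (g \<otimes> inv h))"
    using g h by (simp add: lin_char_mult)
  also have "\<dots> = (if g \<otimes> inv h = \<one> then of_nat (card Irr) else 0)" using g h sum_lin_chars by simp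
  also have "(g \<otimes> inv h = \<one>) = (g = h)" using g h inv_equality[of g "inv h"] by auto
  finally show ?thesis by (simp add: card_Irr)
qed

lemma char_inner_lin_chars:
  "\<chi> \<in> Irr \<Longrightarrow> \<psi> \<in> Irr \<Longrightarrow> char_inner G \<chi> \<psi> = (if \<chi> = \<psi> then 1 else 0)"
  using lin_chars_orthogonality order_pos by (simp add: char_inner_def)

definition grp_alg_eval :: "('g \<Rightarrow> 'k) \<Rightarrow> ('g \<Rightarrow> 'k) \<Rightarrow> 'k" where
  "grp_alg_eval f a = (\<Sum>x\<in>carrier G. a x * f x)"

definition grp_elem :: "'g \<Rightarrow> 'g \<Rightarrow> 'k" where
  "grp_elem g = (\<lambda>x. if x = g then 1 else 0)"

definition supported :: "('g \<Rightarrow> 'k) \<Rightarrow> bool" where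
  "supported a \<longleftrightarrow> (\<forall>x. x \<notin> carrier G \<longrightarrow> a x = 0)"

lemma grp_alg_one_eq: "grp_alg_one G = grp_elem \<one>"
  by (simp add: grp_alg_one_def grp_elem_def)

lemma grp_alg_eval_grp_elem:
  assumes "g \<in> carrier G"
  shows "grp_alg_eval f (grp_elem g) = f g"
proof -
  have "grp_alg_eval f (grp_elem g) = (\<Sum>x\<in>carrier G. if x = g then f x else 0)"
    unfolding grp_alg_eval_def grp_elem_def by (intro sum.cong) auto
  then show ?thesis using assms finite_carrier by simp
qed

lemma grp_alg_eval_add_left:
  "grp_alg_eval (\<lambda>x. f x + f' x) a = grp_alg_eval f a + grp_alg_eval f' a"
  by (simp add: grp_alg_eval_def algebra_simps sum.distrib)

lemma grp_alg_eval_sum_left: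
  "grp_alg_eval (\<lambda>x. \<Sum>i\<in>S. c i * F i x) a = (\<Sum>i\<in>S. c i * grp_alg_eval (F i) a)"
  unfolding grp_alg_eval_def
    by (simp add: sum_distrib_left sum_distrib_right mult_ac sum.swap[of _ S])

lemma grp_alg_eval_sum_right:
  "grp_alg_eval f (\<lambda>x. \<Sum>i\<in>S. c i * F i x) = (\<Sum>i\<in>S. c i * grp_alg_eval f (F i))"
  unfolding grp_alg_eval_def
    by (simp add: sum_distrib_left sum_distrib_right mult_ac sum.swap[of _ S])

lemma grp_alg_eval_mult:
  assumes \<chi>: "\<chi> \<in> Irr"
  shows "grp_alg_eval \<chi> (grp_alg_mult G a b) = grp_alg_eval \<chi> a * grp_alg_eval \<chi> b"
proof -
  have translate: "(\<Sum>x\<in>carrier G. b (inv y \<otimes> x) * \<chi> x) = \<chi> y * grp_alg_eval \<chi> b"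
    if y: "y \<in> carrier G" for y
  proof -
    have "(\<Sum>x\<in>carrier G. b (inv y \<otimes> x) * \<chi> x) = (\<Sum>z\<in>carrier G. b (inv y \<otimes> (y \<otimes> z)) * \<chi> (y \<otimes> z))"
      using sum.reindex_bij_betw[OF bij_betw_mult_left[OF y], of "\<lambda>x. b (inv y \<otimes> x) * \<chi> x"] by simp
    also have "\<dots> = (\<Sum>z\<in>carrier G. \<chi> y * (b z * \<chi> z))"
      using y by (intro sum.cong refl) (simp add: m_assoc[symmetric] lin_char_mult[OF \<chi>] mult_ac)
    finally show ?thesis by (simp add: grp_alg_eval_def sum_distrib_left)
  qed
  have "grp_alg_eval \<chi> (grp_alg_mult G a b)
      = (\<Sum>x\<in>carrier G. \<Sum>y\<in>carrier G. a y * (b (inv y \<otimes> x) * \<chi> x))"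
    by (simp add: grp_alg_eval_def grp_alg_mult_def sum_distrib_right mult.assoc)
  also have "\<dots> = (\<Sum>y\<in>carrier G. a y * (\<Sum>x\<in>carrier G. b (inv y \<otimes> x) * \<chi> x))"
    by (subst sum.swap) (simp add: sum_distrib_left)
  also have "\<dots> = grp_alg_eval \<chi> a * grp_alg_eval \<chi> b"
    by (simp add: translate grp_alg_eval_def sum_distrib_right mult.assoc)
  finally show ?thesis .
qed

lemma fourier_inversion:
  assumes h: "h \<in> carrier G"
  shows "(\<Sum>\<chi>\<in>Irr. grp_alg_eval \<chi> a * \<chi> (inv h)) = of_nat n * a h"
proof -
  have "(\<Sum>\<chi>\<in>Irr. grp_alg_eval \<chi> a * \<chi> (inv h))
      = (\<Sum>x\<in>carrier G. a x * (\<Sum>\<chi>\<in>Irr. \<chi> x * \<chi> (inv h)))"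
    unfolding grp_alg_eval_def
    by (simp add: sum_distrib_right sum_distrib_left mult.assoc sum.swap[of _ Irr])
  also have "\<dots> = (\<Sum>x\<in>carrier G. if x = h then of_nat n * a x else 0)"
    using h by (intro sum.cong refl) (simp add: lin_chars_column_orthogonality)
  also have "\<dots> = of_nat n * a h" using h finite_carrier by simp
  finally show ?thesis .
qed

lemma grp_alg_eval_inject:
  assumes "supported a" "supported b" "\<forall>\<chi>\<in>Irr. grp_alg_eval \<chi> a = grp_alg_eval \<chi> b"
  shows "a = b"
proof
  fix x show "a x = b x"
  proof (cases "x \<in> carrier G")
    case True
    have "of_nat n * a x = (\<Sum>\<chi>\<in>Irr. grp_alg_eval \<chi> a * \<chi> (inv x))"
      using True by (simp add: fourier_inversion)
    also have "\<dots> = of_nat n * b x"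
      using True assms(3) by (simp add: fourier_inversion[symmetric] cong: sum.cong)
    finally have "of_nat n * a x = of_nat n * b x" .
    then show ?thesis using order_pos by simp
  next
    case False then show ?thesis using assms(1,2) by (simp add: supported_def)
  qed
qed

abbreviation Zirr where "Zirr \<equiv> (ZIrr G :: ('g \<Rightarrow> 'k) set)"

definition char_comb :: "(('g \<Rightarrow> 'k) \<Rightarrow> int) \<Rightarrow> 'g \<Rightarrow> 'k" where
  "char_comb a = (\<lambda>x. \<Sum>\<chi>\<in>Irr. of_int (a \<chi>) * \<chi> x)"

lemma ZIrr_iff: "f \<in> Zirr \<longleftrightarrow> (\<exists>a. f = char_comb a)"
  by (simp add: ZIrr_def char_comb_def)

lemma char_comb_ZIrr: "char_comb a \<in> Zirr"
  using ZIrr_iff by blast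

lemma subset_comb_ZIrr:
  assumes "S \<subseteq> Irr"
  shows "(\<lambda>x. \<Sum>\<chi>\<in>S. of_int (a \<chi>) * \<chi> x) \<in> Zirr"
proof -
  have "(\<lambda>x. \<Sum>\<chi>\<in>S. of_int (a \<chi>) * \<chi> x) = char_comb (\<lambda>\<chi>. if \<chi> \<in> S then a \<chi> else 0)"
    unfolding char_comb_def using assms finite_Irr
    by (intro ext sum.mono_neutral_cong_left) auto
  then show ?thesis using char_comb_ZIrr by simp
qed

lemma lin_char_ZIrr: "\<chi> \<in> Irr \<Longrightarrow> \<chi> \<in> Zirr"
  using subset_comb_ZIrr[of "{\<chi>}" "\<lambda>_. 1"] by simp

lemma ZIrr_zero: "(\<lambda>x. 0) \<in> Zirr"
  using subset_comb_ZIrr[of "{}"] by simp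

lemma ZIrr_add: "f \<in> Zirr \<Longrightarrow> g \<in> Zirr \<Longrightarrow> (\<lambda>x. f x + g x) \<in> Zirr"
proof -
  assume "f \<in> Zirr" "g \<in> Zirr"
  then obtain a b where "f = char_comb a" "g = char_comb b" using ZIrr_iff by blast
  then have "(\<lambda>x. f x + g x) = char_comb (\<lambda>\<chi>. a \<chi> + b \<chi>)"
    by (auto simp: char_comb_def algebra_simps sum.distrib)
  then show ?thesis using char_comb_ZIrr by simp
qed

lemma ZIrr_smult: "f \<in> Zirr \<Longrightarrow> (\<lambda>x. of_int k * f x) \<in> Zirr"
proof -
  assume "f \<in> Zirr"
  then obtain a where "f = char_comb a" using ZIrr_iff by blast
  then have "(\<lambda>x. of_int k * f x) = char_comb (\<lambda>\<chi>. k * a \<chi>)"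
    by (auto simp: char_comb_def algebra_simps sum_distrib_left)
  then show ?thesis using char_comb_ZIrr by simp
qed

lemma ZIrr_neg: "f \<in> Zirr \<Longrightarrow> (\<lambda>x. - f x) \<in> Zirr"
  using ZIrr_smult[of f "-1"] by simp

lemma ZIrr_supported: "f \<in> Zirr \<Longrightarrow> supported f"
  by (auto simp: ZIrr_iff char_comb_def supported_def lin_char_outside)

lemma permuted_comb_ZIrr:
  assumes \<tau>: "bij_betw \<tau> Irr Irr"
  shows "(\<lambda>x. \<Sum>\<chi>\<in>Irr. of_int (a \<chi>) * \<tau> \<chi> x) \<in> Zirr"
proof -
  define \<sigma> where "\<sigma> = inv_into Irr \<tau>"
  have "(\<Sum>\<chi>\<in>Irr. of_int (a \<chi>) * \<tau> \<chi> x) = char_comb (\<lambda>\<psi>. a (\<sigma> \<psi>)) x" for x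
  proof -
    have "(\<Sum>\<chi>\<in>Irr. of_int (a \<chi>) * \<tau> \<chi> x) = (\<Sum>\<chi>\<in>Irr. of_int (a (\<sigma> (\<tau> \<chi>))) * \<tau> \<chi> x)"
      using \<tau> by (intro sum.cong) (auto simp: \<sigma>_def bij_betw_def)
    also have "\<dots> = (\<Sum>\<psi>\<in>Irr. of_int (a (\<sigma> \<psi>)) * \<psi> x)"
      using sum.reindex_bij_betw[OF \<tau>, of "\<lambda>\<psi>. of_int (a (\<sigma> \<psi>)) * \<psi> x"] by simp
    finally show ?thesis by (simp add: char_comb_def)
  qed
  then show ?thesis using char_comb_ZIrr by (simp add: fun_eq_iff[symmetric])
qed

lemma char_inner_permuted_comb:
  assumes inj: "inj_on \<tau> Irr" and im: "\<tau> ` Irr \<subseteq> Irr"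
  shows "char_inner G (\<lambda>x. \<Sum>\<chi>\<in>Irr. of_int (a \<chi>) * \<tau> \<chi> x) (\<lambda>x. \<Sum>\<chi>\<in>Irr. of_int (b \<chi>) * \<tau> \<chi> x)
       = of_int (\<Sum>\<chi>\<in>Irr. a \<chi> * b \<chi>)"
proof -
  have orth: "(\<Sum>g\<in>carrier G. \<tau> \<chi> g * \<tau> \<psi> (inv g)) = (if \<chi> = \<psi> then of_nat n else 0)"
    if "\<chi> \<in> Irr" "\<psi> \<in> Irr" for \<chi> \<psi>
    using lin_chars_orthogonality[of "\<tau> \<chi>" "\<tau> \<psi>"] im that inj_on_eq_iff[OF inj that]
    by (auto simp: image_subset_iff)
  have "(\<Sum>g\<in>carrier G. (\<Sum>\<chi>\<in>Irr. of_int (a \<chi>) * \<tau> \<chi> g) * (\<Sum>\<psi>\<in>Irr. of_int (b \<psi>) * \<tau> \<psi> (inv g)))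
      = (\<Sum>g\<in>carrier G. \<Sum>\<chi>\<in>Irr. \<Sum>\<psi>\<in>Irr. of_int (a \<chi>) * of_int (b \<psi>) * (\<tau> \<chi> g * \<tau> \<psi> (inv g)))"
    by (simp add: sum_product mult_ac)
  also have "\<dots> = (\<Sum>\<chi>\<in>Irr. \<Sum>\<psi>\<in>Irr. \<Sum>g\<in>carrier G.
          of_int (a \<chi>) * of_int (b \<psi>) * (\<tau> \<chi> g * \<tau> \<psi> (inv g)))"
    by (subst sum.swap) (intro sum.cong refl sum.swap)
  also have "\<dots> = (\<Sum>\<chi>\<in>Irr. \<Sum>\<psi>\<in>Irr. of_int (a \<chi>) * of_int (b \<psi>) *
          (\<Sum>g\<in>carrier G. \<tau> \<chi> g * \<tau> \<psi> (inv g)))"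
    by (simp add: sum_distrib_left)
  also have "\<dots> = (\<Sum>\<chi>\<in>Irr. \<Sum>\<psi>\<in>Irr. if \<chi> = \<psi> then of_int (a \<chi>) * of_int (b \<psi>) * of_nat n else 0)"
    by (intro sum.cong refl) (simp add: orth)
  also have "\<dots> = (\<Sum>\<chi>\<in>Irr. of_int (a \<chi>) * of_int (b \<chi>) * of_nat n)"
    using finite_Irr by simp
  also have "\<dots> = of_int (\<Sum>\<chi>\<in>Irr. a \<chi> * b \<chi>) * of_nat n" by (simp add: sum_distrib_right)
  finally show ?thesis using order_pos by (simp add: char_inner_def)
qed

lemma char_inner_char_comb: "char_inner G (char_comb a) (char_comb b) = of_int (\<Sum>\<chi>\<in>Irr. a \<chi> * b \<chi>)"
  using char_inner_permuted_comb[of "\<lambda>\<chi>. \<chi>" a b] by (simp add: char_comb_def)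

lemma ZIrr_norm_one:
  assumes f: "f \<in> Zirr" and norm: "char_inner G f f = 1"
  shows "\<exists>\<psi>\<in>Irr. f = \<psi> \<or> f = (\<lambda>x. - \<psi> x)"
proof -
  obtain a where f_eq: "f = char_comb a" using f ZIrr_iff by blast
  have "(of_int (\<Sum>\<chi>\<in>Irr. a \<chi> * a \<chi>) :: 'k) = 1"
    using norm char_inner_char_comb[of a a] f_eq by simp
  then have sq_sum: "(\<Sum>\<chi>\<in>Irr. a \<chi> * a \<chi>) = 1" by (simp only: of_int_eq_1_iff)
  have "\<exists>\<psi>\<in>Irr. a \<psi> \<noteq> 0"
  proof (rule ccontr)
    assume "\<not> ?thesis"
    then show False using sq_sum by simp
  qed
  then obtain \<psi> where \<psi>: "\<psi> \<in> Irr" "a \<psi> \<noteq> 0" by blast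
  have split: "(\<Sum>\<chi>\<in>Irr. a \<chi> * a \<chi>) = a \<psi> * a \<psi> + (\<Sum>\<chi>\<in>Irr - {\<psi>}. a \<chi> * a \<chi>)"
    using \<psi>(1) finite_Irr by (simp add: sum.remove)
  have "(\<Sum>\<chi>\<in>Irr - {\<psi>}. a \<chi> * a \<chi>) \<ge> 0" by (intro sum_nonneg) simp
  moreover have "a \<psi> * a \<psi> \<ge> 1"
    using \<psi>(2) by (metis int_one_le_iff_zero_less zero_less_mult_iff linorder_neqE_linordered_idom)
  ultimately have "a \<psi> * a \<psi> = 1" and rest: "(\<Sum>\<chi>\<in>Irr - {\<psi>}. a \<chi> * a \<chi>) = 0"
    using split sq_sum by linarith+
  then have "a \<psi> = 1 \<or> a \<psi> = -1" by (simp add: zmult_eq_1_iff)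
  have "\<forall>\<chi>\<in>Irr - {\<psi>}. a \<chi> = 0"
    using rest finite_Irr by (subst (asm) sum_nonneg_eq_0_iff) auto
  then have "f x = of_int (a \<psi>) * \<psi> x" for x
    using \<psi>(1) finite_Irr by (simp add: f_eq char_comb_def sum.remove)
  then have "f = (\<lambda>x. of_int (a \<psi>) * \<psi> x)" by blast
  then show ?thesis using \<open>a \<psi> = 1 \<or> a \<psi> = -1\<close> \<psi>(1) by auto
qed

lemma p_regular_iff_one:
  assumes g: "g \<in> carrier G"
  shows "p_regular p G g \<longleftrightarrow> g = \<one>"
proof
  assume "p_regular p G g"
  then have "coprime (ord g) (p ^ N)" by (simp add: p_regular_def)
  moreover have "ord g dvd p ^ N" using ord_dvd_group_order[OF g] order_eq by simp
  ultimately have "is_unit (ord g)" using coprime_absorb_left by blast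
  then have "ord g = 1" by simp
  then show "g = \<one>" using ord_eq_1[OF g] by simp
next
  assume "g = \<one>" then show "p_regular p G g" by (simp add: p_regular_def)
qed

end

section \<open>The group algebra and its automorphisms\<close>

locale abelian_p_group_algebra = split_abelian_p_group G p N \<zeta>
  for G :: "('g, 'b) monoid_scheme" (structure) and p N and \<zeta> :: "'k::field_char_0" +
  fixes \<O> :: "'k set"
  assumes O_zero: "0 \<in> \<O>" and O_one: "1 \<in> \<O>" and O_add: "x \<in> \<O> \<Longrightarrow> y \<in> \<O> \<Longrightarrow> x + y \<in> \<O>"
    and O_mult: "x \<in> \<O> \<Longrightarrow> y \<in> \<O> \<Longrightarrow> x * y \<in> \<O>" and O_uminus: "x \<in> \<O> \<Longrightarrow> - x \<in> \<O>"
begin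

abbreviation OG where "OG \<equiv> (grp_alg \<O> G :: ('g \<Rightarrow> 'k) set)"

lemma sum_in_O: "(\<And>i. i \<in> S \<Longrightarrow> f i \<in> \<O>) \<Longrightarrow> sum f S \<in> \<O>"
proof (induction S rule: infinite_finite_induct)
  case (infinite A) then show ?case using O_zero by simp
next
  case empty then show ?case using O_zero by simp
next
  case (insert x F) then show ?case using O_add by simp
qed

lemma grp_alg_iff: "a \<in> OG \<longleftrightarrow> (\<forall>x\<in>carrier G. a x \<in> \<O>) \<and> supported a"
  by (auto simp: grp_alg_def supported_def)

lemma grp_alg_supported: "a \<in> OG \<Longrightarrow> supported a" by (simp add: grp_alg_iff)

lemma grp_alg_add: "a \<in> OG \<Longrightarrow> b \<in> OG \<Longrightarrow> (\<lambda>x. a x + b x) \<in> OG"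
  by (auto simp: grp_alg_iff supported_def O_add)
lemma grp_alg_smult: "c \<in> \<O> \<Longrightarrow> a \<in> OG \<Longrightarrow> (\<lambda>x. c * a x) \<in> OG"
  by (auto simp: grp_alg_iff supported_def O_mult)
lemma grp_alg_zero: "(\<lambda>x. 0) \<in> OG"
  by (auto simp: grp_alg_iff supported_def O_zero)
lemma grp_alg_grp_elem: "g \<in> carrier G \<Longrightarrow> grp_elem g \<in> OG"
  by (auto simp: grp_alg_iff supported_def grp_elem_def O_zero O_one)
lemma grp_alg_one_mem: "grp_alg_one G \<in> OG"
  using grp_alg_grp_elem[of \<one>] by (simp add: grp_alg_one_eq)
lemma grp_alg_mult_mem: "a \<in> OG \<Longrightarrow> b \<in> OG \<Longrightarrow> grp_alg_mult G a b \<in> OG"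
  by (auto simp: grp_alg_iff supported_def grp_alg_mult_def intro!: sum_in_O O_mult)
lemma grp_alg_sum: "(\<And>i. i \<in> S \<Longrightarrow> F i \<in> OG) \<Longrightarrow> (\<lambda>x. \<Sum>i\<in>S. F i x) \<in> OG"
  by (auto simp: grp_alg_iff supported_def intro!: sum_in_O)

lemma grp_elem_mult:
  "x \<in> carrier G \<Longrightarrow> y \<in> carrier G
    \<Longrightarrow> grp_alg_mult G (grp_elem x) (grp_elem y) = grp_elem (x \<otimes> y)"
proof
  fix z assume x: "x \<in> carrier G" and y: "y \<in> carrier G"
  show "grp_alg_mult G (grp_elem x) (grp_elem y) z = grp_elem (x \<otimes> y) z"
  proof (cases "z \<in> carrier G")
    case True
    have "grp_alg_mult G (grp_elem x) (grp_elem y) z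
            = (\<Sum>w\<in>carrier G. if w = x then grp_elem y (inv w \<otimes> z) else 0)"
      using True unfolding grp_alg_mult_def by (simp, intro sum.cong) (auto simp: grp_elem_def)
    also have "\<dots> = grp_elem y (inv x \<otimes> z)" using x finite_carrier by simp
    moreover have "(inv x \<otimes> z = y) = (z = x \<otimes> y)" using x y True
      by (metis inv_closed inv_solve_left' m_closed)
    ultimately show ?thesis by (simp add: grp_elem_def)
  next
    case False
    then have "z \<noteq> x \<otimes> y" using x y by auto
    then show ?thesis using False by (simp add: grp_alg_mult_def grp_elem_def)
  qed
qed

text \<open>\<open>char_perm_elem \<tau> g\<close> is the element of \<open>KG\<close> whose value under each \<open>\<chi> \<in> Irr\<close> is
  \<open>\<tau> \<chi> g\<close> (Fourier inversion); \<open>char_perm_aut \<tau>\<close> is the \<open>K\<close>-algebra automorphism dual to the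
  permutation \<open>\<tau>\<close> of \<open>Irr\<close>, restricted to \<open>OG\<close>.\<close>

definition char_perm_elem :: "(('g \<Rightarrow> 'k) \<Rightarrow> ('g \<Rightarrow> 'k)) \<Rightarrow> 'g \<Rightarrow> 'g \<Rightarrow> 'k" where
  "char_perm_elem \<tau> g h = (if h \<in> carrier G then (\<Sum>\<chi>\<in>Irr. \<tau> \<chi> g * \<chi> (inv h)) / of_nat n else 0)"

definition char_perm_aut :: "(('g \<Rightarrow> 'k) \<Rightarrow> ('g \<Rightarrow> 'k)) \<Rightarrow> ('g \<Rightarrow> 'k) \<Rightarrow> ('g \<Rightarrow> 'k)" where
  "char_perm_aut \<tau> = restrict (\<lambda>a h. \<Sum>x\<in>carrier G. a x * char_perm_elem \<tau> x h) OG"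

definition integral_char_perm :: "(('g \<Rightarrow> 'k) \<Rightarrow> ('g \<Rightarrow> 'k)) \<Rightarrow> bool" where
  "integral_char_perm \<tau> \<longleftrightarrow> (\<forall>g\<in>carrier G. \<forall>h\<in>carrier G. char_perm_elem \<tau> g h \<in> \<O>)"

lemma grp_alg_eval_char_perm_elem:
  assumes \<tau>: "bij_betw \<tau> Irr Irr" and c: "\<chi> \<in> Irr" and g: "g \<in> carrier G"
  shows "grp_alg_eval \<chi> (char_perm_elem \<tau> g) = \<tau> \<chi> g"
proof -
  have "grp_alg_eval \<chi> (char_perm_elem \<tau> g)
        = (\<Sum>h\<in>carrier G. ((\<Sum>\<psi>\<in>Irr. \<tau> \<psi> g * \<psi> (inv h)) / of_nat n) * \<chi> h)"
    unfolding grp_alg_eval_def char_perm_elem_def by (intro sum.cong refl) simp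
  also have "\<dots> = (\<Sum>h\<in>carrier G. \<Sum>\<psi>\<in>Irr. (\<tau> \<psi> g / of_nat n) * (\<chi> h * \<psi> (inv h)))"
    by (intro sum.cong refl)
      (simp add: sum_divide_distrib sum_distrib_right sum_distrib_left mult_ac)
  also have "\<dots> = (\<Sum>\<psi>\<in>Irr. \<Sum>h\<in>carrier G. (\<tau> \<psi> g / of_nat n) * (\<chi> h * \<psi> (inv h)))" by (rule sum.swap)
  also have "\<dots> = (\<Sum>\<psi>\<in>Irr. (\<tau> \<psi> g / of_nat n) * (if \<chi> = \<psi> then of_nat n else 0))"
  proof (intro sum.cong refl)
    fix \<psi> assume d: "\<psi> \<in> Irr"
    have "(\<Sum>h\<in>carrier G. (\<tau> \<psi> g / of_nat n) * (\<chi> h * \<psi> (inv h)))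
        = (\<tau> \<psi> g / of_nat n) * (\<Sum>h\<in>carrier G. \<chi> h * \<psi> (inv h))"
      by (rule sum_distrib_left[symmetric])
    also have "(\<Sum>h\<in>carrier G. \<chi> h * \<psi> (inv h)) = (if \<chi> = \<psi> then of_nat n else 0)"
      by (rule lin_chars_orthogonality[OF c d])
    finally show "(\<Sum>h\<in>carrier G. (\<tau> \<psi> g / of_nat n) * (\<chi> h * \<psi> (inv h)))
        = (\<tau> \<psi> g / of_nat n) * (if \<chi> = \<psi> then of_nat n else 0)" .
  qed
  also have "\<dots> = (\<Sum>\<psi>\<in>Irr. if \<chi> = \<psi> then \<tau> \<psi> g else 0)"
    using order_pos by (intro sum.cong refl) auto
  also have "\<dots> = \<tau> \<chi> g" using c finite_Irr by simp
  finally show ?thesis .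
qed

lemma char_perm_aut_supported: "supported (char_perm_aut \<tau> a)" if "a \<in> OG"
  using that by (simp add: char_perm_aut_def supported_def char_perm_elem_def)

lemma grp_alg_eval_char_perm_aut:
  assumes \<tau>: "bij_betw \<tau> Irr Irr" and c: "\<chi> \<in> Irr" and a: "a \<in> OG"
  shows "grp_alg_eval \<chi> (char_perm_aut \<tau> a) = grp_alg_eval (\<tau> \<chi>) a"
proof -
  have "grp_alg_eval \<chi> (char_perm_aut \<tau> a)
        = grp_alg_eval \<chi> (\<lambda>h. \<Sum>x\<in>carrier G. a x * char_perm_elem \<tau> x h)"
      using a by (simp add: char_perm_aut_def)
  also have "\<dots> = (\<Sum>x\<in>carrier G. a x * grp_alg_eval \<chi> (char_perm_elem \<tau> x))"
    by (rule grp_alg_eval_sum_right)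
  also have "\<dots> = (\<Sum>x\<in>carrier G. a x * \<tau> \<chi> x)"
    by (intro sum.cong refl) (simp add: grp_alg_eval_char_perm_elem[OF \<tau> c])
  finally show ?thesis by (simp add: grp_alg_eval_def)
qed

lemma char_perm_aut_grp_alg:
  assumes I: "integral_char_perm \<tau>" and a: "a \<in> OG"
  shows "char_perm_aut \<tau> a \<in> OG"
  unfolding grp_alg_iff
proof (intro conjI ballI)
  show "supported (char_perm_aut \<tau> a)" using a by (rule char_perm_aut_supported)
  fix h assume h: "h \<in> carrier G"
  have "char_perm_aut \<tau> a h = (\<Sum>x\<in>carrier G. a x * char_perm_elem \<tau> x h)"
    using a by (simp add: char_perm_aut_def)
  also have "\<dots> \<in> \<O>"
  proof (rule sum_in_O)
    fix x assume x: "x \<in> carrier G"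
    show "a x * char_perm_elem \<tau> x h \<in> \<O>"
      using a x h I by (intro O_mult) (auto simp: grp_alg_iff integral_char_perm_def)
  qed
  finally show "char_perm_aut \<tau> a h \<in> \<O>" .
qed

lemma char_perm_aut_eqI:
  assumes "bij_betw \<tau> Irr Irr" "a \<in> OG" "b \<in> OG" "\<forall>\<chi>\<in>Irr. grp_alg_eval (\<tau> \<chi>) a = grp_alg_eval \<chi> b"
  shows "char_perm_aut \<tau> a = b"
  using assms
  by (intro grp_alg_eval_inject char_perm_aut_supported grp_alg_supported)
    (auto simp: grp_alg_eval_char_perm_aut)

lemma integral_char_perm_inv_into:
  assumes \<tau>: "bij_betw \<tau> Irr Irr" and I: "integral_char_perm \<tau>"
  shows "integral_char_perm (inv_into Irr \<tau>)"
  unfolding integral_char_perm_def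
proof (intro ballI)
  fix g h assume g: "g \<in> carrier G" and h: "h \<in> carrier G"
  have "(\<Sum>\<chi>\<in>Irr. inv_into Irr \<tau> \<chi> g * \<chi> (inv h)) = (\<Sum>\<psi>\<in>Irr. inv_into Irr \<tau> (\<tau> \<psi>) g * \<tau> \<psi> (inv h))"
    using sum.reindex_bij_betw[OF \<tau>, of "\<lambda>\<chi>. inv_into Irr \<tau> \<chi> g * \<chi> (inv h)"] by simp
  also have "\<dots> = (\<Sum>\<psi>\<in>Irr. \<tau> \<psi> (inv h) * \<psi> (inv (inv g)))"
    using \<tau> g by (intro sum.cong refl) (auto simp: bij_betw_def mult.commute)
  finally have "char_perm_elem (inv_into Irr \<tau>) g h = char_perm_elem \<tau> (inv h) (inv g)"
    using g h by (simp add: char_perm_elem_def)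
  then show "char_perm_elem (inv_into Irr \<tau>) g h \<in> \<O>"
    using I g h by (simp add: integral_char_perm_def)
qed

lemma char_perm_aut_bij:
  assumes \<tau>: "bij_betw \<tau> Irr Irr" and I: "integral_char_perm \<tau>"
  shows "bij_betw (char_perm_aut \<tau>) OG OG"
proof -
  define \<sigma> where "\<sigma> = inv_into Irr \<tau>"
  have \<sigma>: "bij_betw \<sigma> Irr Irr" unfolding \<sigma>_def using \<tau> by (simp add: bij_betw_inv_into)
  have I\<sigma>: "integral_char_perm \<sigma>" unfolding \<sigma>_def using integral_char_perm_inv_into[OF \<tau> I] .
  have st: "\<sigma> (\<tau> \<chi>) = \<chi>" if "\<chi> \<in> Irr" for \<chi> using \<tau> that by (simp add: \<sigma>_def bij_betw_def)
  have ts: "\<tau> (\<sigma> \<chi>) = \<chi>" if "\<chi> \<in> Irr" for \<chi>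
    using \<tau> that by (simp add: \<sigma>_def bij_betw_inv_into_right)
  have "char_perm_aut \<tau> (char_perm_aut \<sigma> a) = a" if a: "a \<in> OG" for a
    using \<tau> char_perm_aut_grp_alg[OF I\<sigma> a] a bij_betwE[OF \<tau>]
    by (intro char_perm_aut_eqI) (auto simp: grp_alg_eval_char_perm_aut[OF \<sigma>] st)
  moreover have "char_perm_aut \<sigma> (char_perm_aut \<tau> a) = a" if a: "a \<in> OG" for a
    using \<sigma> char_perm_aut_grp_alg[OF I a] a bij_betwE[OF \<sigma>]
    by (intro char_perm_aut_eqI) (auto simp: grp_alg_eval_char_perm_aut[OF \<tau>] ts)
  ultimately show ?thesis
    by (intro bij_betw_byWitness[where f' = "char_perm_aut \<sigma>"])
      (use char_perm_aut_grp_alg I I\<sigma> in auto)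
qed

lemma char_perm_aut_mult:
  assumes \<tau>: "bij_betw \<tau> Irr Irr" and a: "a \<in> OG" and b: "b \<in> OG"
  shows "char_perm_aut \<tau> (grp_alg_mult G a b) =
    grp_alg_mult G (char_perm_aut \<tau> a) (char_perm_aut \<tau> b)"
proof (rule grp_alg_eval_inject)
  show "supported (char_perm_aut \<tau> (grp_alg_mult G a b))"
    using grp_alg_mult_mem[OF a b] by (rule char_perm_aut_supported)
  show "supported (grp_alg_mult G (char_perm_aut \<tau> a) (char_perm_aut \<tau> b))"
    by (simp add: supported_def grp_alg_mult_def)
  show "\<forall>\<chi>\<in>Irr. grp_alg_eval \<chi> (char_perm_aut \<tau> (grp_alg_mult G a b))
          = grp_alg_eval \<chi> (grp_alg_mult G (char_perm_aut \<tau> a) (char_perm_aut \<tau> b))"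
    using a b grp_alg_mult_mem[OF a b] bij_betwE[OF \<tau>]
    by (auto simp: grp_alg_eval_char_perm_aut[OF \<tau>] grp_alg_eval_mult)
qed

lemma char_perm_aut_alg_auts:
  assumes \<tau>: "bij_betw \<tau> Irr Irr" and I: "integral_char_perm \<tau>"
  shows "char_perm_aut \<tau> \<in> alg_auts \<O> G"
proof -
  have add: "char_perm_aut \<tau> (\<lambda>x. a x + b x)
      = (\<lambda>x. char_perm_aut \<tau> a x + char_perm_aut \<tau> b x)"
    if "a \<in> OG" "b \<in> OG" for a b
    using that grp_alg_add[OF that] by (auto simp: char_perm_aut_def algebra_simps sum.distrib)
  have smult: "char_perm_aut \<tau> (\<lambda>x. c * a x) = (\<lambda>x. c * char_perm_aut \<tau> a x)"
    if "c \<in> \<O>" "a \<in> OG" for c a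
    using that grp_alg_smult[OF that] by (auto simp: char_perm_aut_def algebra_simps sum_distrib_left)
  have one: "char_perm_aut \<tau> (grp_alg_one G) = grp_alg_one G"
    using \<tau> grp_alg_one_mem bij_betwE[OF \<tau>]
    by (intro char_perm_aut_eqI) (auto simp: grp_alg_one_eq grp_alg_eval_grp_elem lin_char_one)
  show ?thesis unfolding alg_auts_def
    using char_perm_aut_bij[OF \<tau> I] add smult char_perm_aut_mult[OF \<tau>] one
    by (auto simp: char_perm_aut_def)
qed

lemma alg_aut_grp_alg: "\<phi> \<in> alg_auts \<O> G \<Longrightarrow> a \<in> OG \<Longrightarrow> \<phi> a \<in> OG"
  unfolding alg_auts_def using bij_betwE by blast

lemma alg_aut_add: "\<phi> \<in> alg_auts \<O> G \<Longrightarrow> a \<in> OG \<Longrightarrow> b \<in> OG \<Longrightarrow> \<phi> (\<lambda>x. a x + b x) = (\<lambda>x. \<phi> a x + \<phi> b x)"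
  unfolding alg_auts_def by blast
lemma alg_aut_smult: "\<phi> \<in> alg_auts \<O> G \<Longrightarrow> c \<in> \<O> \<Longrightarrow> a \<in> OG \<Longrightarrow> \<phi> (\<lambda>x. c * a x) = (\<lambda>x. c * \<phi> a x)"
  unfolding alg_auts_def by blast
lemma alg_aut_mult: "\<phi> \<in> alg_auts \<O> G \<Longrightarrow> a \<in> OG \<Longrightarrow> b \<in> OG \<Longrightarrow>
    \<phi> (grp_alg_mult G a b) = grp_alg_mult G (\<phi> a) (\<phi> b)"
  unfolding alg_auts_def by blast
lemma alg_aut_one: "\<phi> \<in> alg_auts \<O> G \<Longrightarrow> \<phi> (grp_alg_one G) = grp_alg_one G"
  unfolding alg_auts_def by blast
lemma alg_aut_bij: "\<phi> \<in> alg_auts \<O> G \<Longrightarrow> bij_betw \<phi> OG OG"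
  unfolding alg_auts_def by blast
lemma alg_aut_extensional: "\<phi> \<in> alg_auts \<O> G \<Longrightarrow> \<phi> \<in> extensional OG"
  unfolding alg_auts_def by blast

lemma alg_aut_zero:
  assumes "\<phi> \<in> alg_auts \<O> G"
  shows "\<phi> (\<lambda>x. 0) = (\<lambda>x. 0)"
  using alg_aut_add[OF assms grp_alg_zero grp_alg_zero] by (simp add: fun_eq_iff)

lemma alg_aut_expand_subset:
  assumes \<phi>: "\<phi> \<in> alg_auts \<O> G" and a: "a \<in> OG" and S: "S \<subseteq> carrier G"
  shows "\<phi> (\<lambda>y. \<Sum>x\<in>S. a x * grp_elem x y) = (\<lambda>y. \<Sum>x\<in>S. a x * \<phi> (grp_elem x) y)"
proof -
  have "finite S" using S finite_carrier finite_subset by blast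
  then show ?thesis using S
  proof (induction S rule: finite_induct)
    case empty then show ?case using alg_aut_zero[OF \<phi>] by simp
  next
    case (insert z F)
    have z: "z \<in> carrier G" and F: "F \<subseteq> carrier G" using insert by auto
    have az: "a z \<in> \<O>" using a z by (simp add: grp_alg_iff)
    have m1: "(\<lambda>y. a z * grp_elem z y) \<in> OG" using grp_alg_smult[OF az grp_alg_grp_elem[OF z]] .
    have m2: "(\<lambda>y. \<Sum>x\<in>F. a x * grp_elem x y) \<in> OG"
      using F a by (intro grp_alg_sum grp_alg_smult grp_alg_grp_elem) (auto simp: grp_alg_iff)
    have "\<phi> (\<lambda>y. \<Sum>x\<in>insert z F. a x * grp_elem x y)
            = \<phi> (\<lambda>y. a z * grp_elem z y + (\<Sum>x\<in>F. a x * grp_elem x y))"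
      using insert by simp
    also have "\<dots> = (\<lambda>y. \<phi> (\<lambda>y. a z * grp_elem z y) y + \<phi> (\<lambda>y. \<Sum>x\<in>F. a x * grp_elem x y) y)"
      using alg_aut_add[OF \<phi> m1 m2] by simp
    also have "\<phi> (\<lambda>y. a z * grp_elem z y) = (\<lambda>y. a z * \<phi> (grp_elem z) y)"
      using alg_aut_smult[OF \<phi> az grp_alg_grp_elem[OF z]] by simp
    also have "\<phi> (\<lambda>y. \<Sum>x\<in>F. a x * grp_elem x y) = (\<lambda>y. \<Sum>x\<in>F. a x * \<phi> (grp_elem x) y)"
      using insert F by blast
    finally show ?case using insert by simp
  qed
qed

lemma grp_alg_expand: "a \<in> OG \<Longrightarrow> a = (\<lambda>y. \<Sum>x\<in>carrier G. a x * grp_elem x y)"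
proof
  fix y assume a: "a \<in> OG"
  show "a y = (\<Sum>x\<in>carrier G. a x * grp_elem x y)"
  proof (cases "y \<in> carrier G")
    case True
    have "(\<Sum>x\<in>carrier G. a x * grp_elem x y) = (\<Sum>x\<in>carrier G. if x = y then a x else 0)"
      by (intro sum.cong) (auto simp: grp_elem_def)
    then show ?thesis using True finite_carrier by simp
  next
    case False
    have "(\<Sum>x\<in>carrier G. a x * grp_elem x y) = 0"
      using False by (intro sum.neutral) (auto simp: grp_elem_def)
    then show ?thesis using a False by (auto simp: grp_alg_iff supported_def)
  qed
qed

lemma alg_aut_expand:
  assumes \<phi>: "\<phi> \<in> alg_auts \<O> G" and a: "a \<in> OG"
  shows "\<phi> a = (\<lambda>y. \<Sum>x\<in>carrier G. a x * \<phi> (grp_elem x) y)"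
  using alg_aut_expand_subset[OF \<phi> a order_refl] grp_alg_expand[OF a] by simp

lemma alg_aut_eqI:
  assumes "\<phi> \<in> alg_auts \<O> G" "\<psi> \<in> alg_auts \<O> G" "\<forall>g\<in>carrier G. \<phi> (grp_elem g) = \<psi> (grp_elem g)"
  shows "\<phi> = \<psi>"
proof (rule extensionalityI[where A = OG])
  show "\<phi> \<in> extensional OG" "\<psi> \<in> extensional OG" using assms by (auto simp: alg_auts_def)
  fix a assume "a \<in> OG"
  then show "\<phi> a = \<psi> a" using assms by (simp add: alg_aut_expand)
qed

definition aut_inv :: "(('g \<Rightarrow> 'k) \<Rightarrow> ('g \<Rightarrow> 'k)) \<Rightarrow> ('g \<Rightarrow> 'k) \<Rightarrow> ('g \<Rightarrow> 'k)" where
  "aut_inv \<phi> = restrict (inv_into OG \<phi>) OG"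

lemma aut_inv_grp_alg:
  assumes "\<phi> \<in> alg_auts \<O> G" "a \<in> OG"
  shows "aut_inv \<phi> a \<in> OG"
  using bij_betw_inv_into[OF alg_aut_bij[OF assms(1)]] assms(2) by (simp add: aut_inv_def bij_betwE)

lemma alg_aut_aut_inv:
  assumes "\<phi> \<in> alg_auts \<O> G" "a \<in> OG"
  shows "\<phi> (aut_inv \<phi> a) = a"
  using alg_aut_bij[OF assms(1)] assms(2) by (simp add: aut_inv_def bij_betw_inv_into_right)

lemma aut_inv_alg_aut:
  assumes "\<phi> \<in> alg_auts \<O> G" "a \<in> OG"
  shows "aut_inv \<phi> (\<phi> a) = a"
  using alg_aut_bij[OF assms(1)] alg_aut_grp_alg[OF assms] assms(2)
  by (simp add: aut_inv_def bij_betw_inv_into_left)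

lemma aut_inv_alg_auts:
  assumes \<phi>: "\<phi> \<in> alg_auts \<O> G"
  shows "aut_inv \<phi> \<in> alg_auts \<O> G"
proof -
  note mem = aut_inv_grp_alg[OF \<phi>] and right = alg_aut_aut_inv[OF \<phi>]
    and left = aut_inv_alg_aut[OF \<phi>]
  let ?\<psi> = "aut_inv \<phi>"
  have bij: "bij_betw ?\<psi> OG OG"
    by (rule bij_betw_byWitness[where f' = \<phi>]) (use mem right left alg_aut_grp_alg[OF \<phi>] in auto)
  have add: "?\<psi> (\<lambda>x. a x + b x) = (\<lambda>x. ?\<psi> a x + ?\<psi> b x)" if a: "a \<in> OG" and b: "b \<in> OG" for a b
  proof -
    have "\<phi> (\<lambda>x. ?\<psi> a x + ?\<psi> b x) = (\<lambda>x. a x + b x)"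
      using alg_aut_add[OF \<phi> mem[OF a] mem[OF b]] right[OF a] right[OF b] by simp
    then show ?thesis using left[OF grp_alg_add[OF mem[OF a] mem[OF b]]] by simp
  qed
  have sm: "?\<psi> (\<lambda>x. c * a x) = (\<lambda>x. c * ?\<psi> a x)" if c: "c \<in> \<O>" and a: "a \<in> OG" for c a
  proof -
    have "\<phi> (\<lambda>x. c * ?\<psi> a x) = (\<lambda>x. c * a x)"
      using alg_aut_smult[OF \<phi> c mem[OF a]] right[OF a] by simp
    then show ?thesis using left[OF grp_alg_smult[OF c mem[OF a]]] by simp
  qed
  have mul: "?\<psi> (grp_alg_mult G a b) = grp_alg_mult G (?\<psi> a) (?\<psi> b)"
      if a: "a \<in> OG" and b: "b \<in> OG" for a b
  proof -
    have "\<phi> (grp_alg_mult G (?\<psi> a) (?\<psi> b)) = grp_alg_mult G a b"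
      using alg_aut_mult[OF \<phi> mem[OF a] mem[OF b]] right[OF a] right[OF b] by simp
    then show ?thesis using left[OF grp_alg_mult_mem[OF mem[OF a] mem[OF b]]] by simp
  qed
  have one: "?\<psi> (grp_alg_one G) = grp_alg_one G"
    using left[OF grp_alg_one_mem] alg_aut_one[OF \<phi>] by simp
  show ?thesis unfolding alg_auts_def using bij add sm mul one by (simp add: aut_inv_def)
qed

lemma compose_alg_auts:
  assumes \<phi>: "\<phi> \<in> alg_auts \<O> G" and \<psi>: "\<psi> \<in> alg_auts \<O> G"
  shows "compose OG \<phi> \<psi> \<in> alg_auts \<O> G"
proof -
  have bij: "bij_betw (compose OG \<phi> \<psi>) OG OG"
    using bij_betw_compose[OF alg_aut_bij[OF \<psi>] alg_aut_bij[OF \<phi>]] .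
  have add: "compose OG \<phi> \<psi> (\<lambda>x. a x + b x) = (\<lambda>x. compose OG \<phi> \<psi> a x + compose OG \<phi> \<psi> b x)"
    if a: "a \<in> OG" and b: "b \<in> OG" for a b
    using a b grp_alg_add[OF a b] alg_aut_add[OF \<psi> a b]
          alg_aut_add[OF \<phi> alg_aut_grp_alg[OF \<psi> a] alg_aut_grp_alg[OF \<psi> b]]
    by (simp add: compose_eq)
  have sm: "compose OG \<phi> \<psi> (\<lambda>x. c * a x) = (\<lambda>x. c * compose OG \<phi> \<psi> a x)"
      if c: "c \<in> \<O>" and a: "a \<in> OG" for c a
    using a grp_alg_smult[OF c a] alg_aut_smult[OF \<psi> c a]
          alg_aut_smult[OF \<phi> c alg_aut_grp_alg[OF \<psi> a]]
    by (simp add: compose_eq)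
  have mul: "compose OG \<phi> \<psi> (grp_alg_mult G a b)
        = grp_alg_mult G (compose OG \<phi> \<psi> a) (compose OG \<phi> \<psi> b)"
    if a: "a \<in> OG" and b: "b \<in> OG" for a b
    using a b grp_alg_mult_mem[OF a b] alg_aut_mult[OF \<psi> a b]
          alg_aut_mult[OF \<phi> alg_aut_grp_alg[OF \<psi> a] alg_aut_grp_alg[OF \<psi> b]]
    by (simp add: compose_eq)
  have one: "compose OG \<phi> \<psi> (grp_alg_one G) = grp_alg_one G"
    using grp_alg_one_mem alg_aut_one[OF \<psi>] alg_aut_one[OF \<phi>] by (simp add: compose_eq)
  show ?thesis unfolding alg_auts_def using bij add sm mul one by simp
qed

lemma id_alg_auts: "restrict id OG \<in> alg_auts \<O> G"
  unfolding alg_auts_def using grp_alg_add grp_alg_smult grp_alg_mult_mem grp_alg_one_mem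
  by (auto simp: bij_betw_def inj_on_def)

lemma aut_inv_compose: "\<phi> \<in> alg_auts \<O> G \<Longrightarrow> compose OG (aut_inv \<phi>) \<phi> = restrict id OG"
  by (rule extensionalityI[where A = OG])
    (use aut_inv_grp_alg alg_aut_aut_inv aut_inv_alg_aut in \<open>auto simp: compose_eq\<close>)

lemma compose_aut_inv: "\<phi> \<in> alg_auts \<O> G \<Longrightarrow> compose OG \<phi> (aut_inv \<phi>) = restrict id OG"
  by (rule extensionalityI[where A = OG])
    (use aut_inv_grp_alg alg_aut_aut_inv aut_inv_alg_aut in \<open>auto simp: compose_eq\<close>)

lemma id_compose_alg_aut: "\<phi> \<in> alg_auts \<O> G \<Longrightarrow> compose OG (restrict id OG) \<phi> = \<phi>"
  by (rule extensionalityI[where A = OG])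
    (use alg_aut_extensional alg_aut_grp_alg in \<open>auto simp: compose_eq\<close>)

lemma group_Aut_alg: "group (Aut_alg \<O> G)"
proof (rule groupI, unfold Aut_alg_def monoid.select_convs partial_object.select_convs)
  fix \<phi> \<psi> \<chi> assume "\<chi> \<in> alg_auts \<O> G"
  then have "\<chi> \<in> OG \<rightarrow> OG" using alg_aut_grp_alg by blast
  then show "compose OG (compose OG \<phi> \<psi>) \<chi> = compose OG \<phi> (compose OG \<psi> \<chi>)"
    by (rule compose_assoc[symmetric])
next
  fix \<phi> assume "\<phi> \<in> alg_auts \<O> G"
  then show "\<exists>\<psi>\<in>alg_auts \<O> G. compose OG \<psi> \<phi> = restrict id OG"
    using aut_inv_alg_auts aut_inv_compose by blast
qed (simp_all add: compose_alg_auts id_alg_auts id_compose_alg_aut)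

section \<open>Perfect isometries\<close>

definition aut_char_perm :: "(('g \<Rightarrow> 'k) \<Rightarrow> ('g \<Rightarrow> 'k)) \<Rightarrow> ('g \<Rightarrow> 'k) \<Rightarrow> ('g \<Rightarrow> 'k)" where
  "aut_char_perm \<alpha> \<chi> = (\<lambda>g. if g \<in> carrier G then grp_alg_eval \<chi> (\<alpha> (grp_elem g)) else 0)"

text \<open>\<open>aut_isometry \<alpha> s\<close> is \<open>f \<mapsto> s \<cdot> (f \<circ> \<alpha>)\<close>, with \<open>f\<close> extended linearly to the group algebra.\<close>

definition aut_isometry :: "(('g \<Rightarrow> 'k) \<Rightarrow> ('g \<Rightarrow> 'k)) \<Rightarrow> int \<Rightarrow> ('g \<Rightarrow> 'k) \<Rightarrow> ('g \<Rightarrow> 'k)" where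
  "aut_isometry \<alpha> s = restrict
      (\<lambda>f g. if g \<in> carrier G then of_int s * grp_alg_eval f (\<alpha> (grp_elem g)) else 0) Zirr"

lemma aut_char_perm_Irr:
  assumes \<alpha>: "\<alpha> \<in> alg_auts \<O> G" and c: "\<chi> \<in> Irr"
  shows "aut_char_perm \<alpha> \<chi> \<in> Irr"
proof -
  have m: "aut_char_perm \<alpha> \<chi> (x \<otimes> y) = aut_char_perm \<alpha> \<chi> x * aut_char_perm \<alpha> \<chi> y"
      if x: "x \<in> carrier G" and y: "y \<in> carrier G" for x y
  proof -
    have "\<alpha> (grp_elem (x \<otimes> y)) = grp_alg_mult G (\<alpha> (grp_elem x)) (\<alpha> (grp_elem y))"
      using alg_aut_mult[OF \<alpha> grp_alg_grp_elem[OF x] grp_alg_grp_elem[OF y]] grp_elem_mult[OF x y]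
      by simp
    then have "grp_alg_eval \<chi> (\<alpha> (grp_elem (x \<otimes> y)))
            = grp_alg_eval \<chi> (\<alpha> (grp_elem x)) * grp_alg_eval \<chi> (\<alpha> (grp_elem y))"
      using grp_alg_eval_mult[OF c] by simp
    moreover have "x \<otimes> y \<in> carrier G" using x y by simp
    ultimately show ?thesis using x y unfolding aut_char_perm_def by (simp only: if_P)
  qed
  have a1: "\<alpha> (grp_elem \<one>) = grp_elem \<one>" using alg_aut_one[OF \<alpha>] by (simp add: grp_alg_one_eq)
  have o: "aut_char_perm \<alpha> \<chi> \<one> = 1"
    using a1 by (simp add: aut_char_perm_def grp_alg_eval_grp_elem lin_char_one[OF c])
  have z: "aut_char_perm \<alpha> \<chi> x = 0" if "x \<notin> carrier G" for x
    using that by (simp add: aut_char_perm_def)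
  show ?thesis unfolding lin_chars_def mem_Collect_eq using m o z by blast
qed

lemma grp_alg_eval_alg_aut:
  assumes \<alpha>: "\<alpha> \<in> alg_auts \<O> G" and a: "a \<in> OG"
  shows "grp_alg_eval f (\<alpha> a)
        = grp_alg_eval (\<lambda>g. if g \<in> carrier G then grp_alg_eval f (\<alpha> (grp_elem g)) else 0) a"
proof -
  have "grp_alg_eval f (\<alpha> a) = grp_alg_eval f (\<lambda>y. \<Sum>x\<in>carrier G. a x * \<alpha> (grp_elem x) y)"
    using alg_aut_expand[OF \<alpha> a] by simp
  also have "\<dots> = (\<Sum>x\<in>carrier G. a x * grp_alg_eval f (\<alpha> (grp_elem x)))"
    by (rule grp_alg_eval_sum_right)
  finally show ?thesis by (simp add: grp_alg_eval_def)
qed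

lemma grp_alg_eval_alg_aut_char_perm:
  "\<alpha> \<in> alg_auts \<O> G \<Longrightarrow> a \<in> OG
    \<Longrightarrow> grp_alg_eval \<chi> (\<alpha> a) = grp_alg_eval (aut_char_perm \<alpha> \<chi>) a"
  using grp_alg_eval_alg_aut by (simp add: aut_char_perm_def)

lemma aut_char_perm_bij:
  assumes \<alpha>: "\<alpha> \<in> alg_auts \<O> G"
  shows "bij_betw (aut_char_perm \<alpha>) Irr Irr"
proof -
  have inj: "inj_on (aut_char_perm \<alpha>) Irr"
  proof (rule inj_onI)
    fix \<chi> \<chi>' assume c: "\<chi> \<in> Irr" and c': "\<chi>' \<in> Irr" and e: "aut_char_perm \<alpha> \<chi> = aut_char_perm \<alpha> \<chi>'"
    have A: "grp_alg_eval \<chi> (\<alpha> a) = grp_alg_eval \<chi>' (\<alpha> a)" if "a \<in> OG" for a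
      using e grp_alg_eval_alg_aut_char_perm[OF \<alpha> that] by simp
    have all: "\<forall>b\<in>OG. grp_alg_eval \<chi> b = grp_alg_eval \<chi>' b"
    proof
      fix b assume b: "b \<in> OG"
      then show "grp_alg_eval \<chi> b = grp_alg_eval \<chi>' b"
        using A[OF aut_inv_grp_alg[OF \<alpha> b]] alg_aut_aut_inv[OF \<alpha> b] by simp
    qed
    show "\<chi> = \<chi>'"
    proof
      fix g show "\<chi> g = \<chi>' g"
        using all grp_alg_grp_elem[of g] grp_alg_eval_grp_elem[of g]
            lin_char_outside[OF c] lin_char_outside[OF c']
        by (cases "g \<in> carrier G") auto
    qed
  qed
  moreover have "aut_char_perm \<alpha> ` Irr \<subseteq> Irr" using aut_char_perm_Irr[OF \<alpha>] by blast
  ultimately show ?thesis using finite_Irr by (simp add: bij_betw_def endo_inj_surj)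
qed

lemma aut_isometry_char_comb:
  "aut_isometry \<alpha> s (char_comb a) = (\<lambda>g. \<Sum>\<chi>\<in>Irr. of_int (s * a \<chi>) * aut_char_perm \<alpha> \<chi> g)"
proof -
  have "char_comb a \<in> Zirr" using ZIrr_iff by blast
  moreover have "grp_alg_eval (char_comb a) b = (\<Sum>\<chi>\<in>Irr. of_int (a \<chi>) * grp_alg_eval \<chi> b)" for b
    unfolding char_comb_def by (rule grp_alg_eval_sum_left)
  ultimately show ?thesis
    by (auto simp: aut_isometry_def aut_char_perm_def sum_distrib_left mult_ac)
qed

lemma aut_isometry_ZIrr:
  assumes \<alpha>: "\<alpha> \<in> alg_auts \<O> G" and f: "f \<in> Zirr"
  shows "aut_isometry \<alpha> s f \<in> Zirr"
proof -
  obtain a where "f = char_comb a" using f ZIrr_iff by blast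
  then show ?thesis
    using aut_isometry_char_comb permuted_comb_ZIrr[OF aut_char_perm_bij[OF \<alpha>], of "\<lambda>\<chi>. s * a \<chi>"]
    by simp
qed

lemma aut_isometry_lin_char:
  assumes "\<chi> \<in> Irr"
  shows "aut_isometry \<alpha> s \<chi> = (\<lambda>g. of_int s * aut_char_perm \<alpha> \<chi> g)"
  using lin_char_ZIrr[OF assms] by (auto simp: aut_isometry_def aut_char_perm_def)

lemma aut_isometry_compose:
  assumes \<alpha>: "\<alpha> \<in> alg_auts \<O> G" and \<beta>: "\<beta> \<in> alg_auts \<O> G" and f: "f \<in> Zirr"
  shows "aut_isometry \<alpha> s (aut_isometry \<beta> t f) = aut_isometry (compose OG \<beta> \<alpha>) (s * t) f"
proof
  fix g
  show "aut_isometry \<alpha> s (aut_isometry \<beta> t f) g = aut_isometry (compose OG \<beta> \<alpha>) (s * t) f g"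
  proof (cases "g \<in> carrier G")
    case False then show ?thesis using f aut_isometry_ZIrr[OF \<beta> f] by (simp add: aut_isometry_def)
  next
    case True
    have aO: "\<alpha> (grp_elem g) \<in> OG" using alg_aut_grp_alg[OF \<alpha> grp_alg_grp_elem[OF True]] .
    have "grp_alg_eval (aut_isometry \<beta> t f) (\<alpha> (grp_elem g))
        = (\<Sum>x\<in>carrier G. \<alpha> (grp_elem g) x * (of_int t * grp_alg_eval f (\<beta> (grp_elem x))))"
      using f by (simp add: grp_alg_eval_def aut_isometry_def)
    also have "\<dots> = of_int t * grp_alg_eval
        (\<lambda>x. if x \<in> carrier G then grp_alg_eval f (\<beta> (grp_elem x)) else 0) (\<alpha> (grp_elem g))"
      by (simp add: grp_alg_eval_def sum_distrib_left mult_ac)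
    also have "\<dots> = of_int t * grp_alg_eval f (\<beta> (\<alpha> (grp_elem g)))"
      using grp_alg_eval_alg_aut[OF \<beta> aO] by simp
    finally show ?thesis using True f aut_isometry_ZIrr[OF \<beta> f] grp_alg_grp_elem[OF True]
      by (simp add: aut_isometry_def compose_eq)
  qed
qed

lemma aut_isometry_id: assumes f: "f \<in> Zirr" shows "aut_isometry (restrict id OG) 1 f = f"
proof
  fix g show "aut_isometry (restrict id OG) 1 f g = f g"
    using f ZIrr_supported[OF f] grp_alg_grp_elem[of g]
    by (auto simp: aut_isometry_def grp_alg_eval_grp_elem supported_def)
qed

lemma mu_of_aut_isometry:
  assumes \<alpha>: "\<alpha> \<in> alg_auts \<O> G" and g: "g \<in> carrier G" and h: "h \<in> carrier G"
  shows "mu_of G (aut_isometry \<alpha> s) g h = of_int s * of_nat n * \<alpha> (grp_elem g) h"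
proof -
  have "mu_of G (aut_isometry \<alpha> s) g h
        = (\<Sum>\<chi>\<in>Irr. of_int s * (grp_alg_eval \<chi> (\<alpha> (grp_elem g)) * \<chi> (inv h)))"
    unfolding mu_of_def
      using g by (intro sum.cong refl) (simp add: aut_isometry_lin_char aut_char_perm_def)
  also have "\<dots> = of_int s * (\<Sum>\<chi>\<in>Irr. grp_alg_eval \<chi> (\<alpha> (grp_elem g)) * \<chi> (inv h))"
    by (simp add: sum_distrib_left)
  also have "\<dots> = of_int s * (of_nat n * \<alpha> (grp_elem g) h)"
    using fourier_inversion[OF h] by simp
  finally show ?thesis by (simp add: mult.assoc)
qed

lemma aut_isometry_bij:
  assumes \<alpha>: "\<alpha> \<in> alg_auts \<O> G" and s: "s \<in> {1, -1}"
  shows "bij_betw (aut_isometry \<alpha> s) Zirr Zirr"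
proof (rule bij_betw_byWitness[where f' = "aut_isometry (aut_inv \<alpha>) s"])
  have \<alpha>': "aut_inv \<alpha> \<in> alg_auts \<O> G" by (rule aut_inv_alg_auts[OF \<alpha>])
  have "s * s = 1" using s by auto
  then show "\<forall>f\<in>Zirr. aut_isometry (aut_inv \<alpha>) s (aut_isometry \<alpha> s f) = f"
    "\<forall>f\<in>Zirr. aut_isometry \<alpha> s (aut_isometry (aut_inv \<alpha>) s f) = f"
    using aut_isometry_compose[OF \<alpha>' \<alpha>] aut_isometry_compose[OF \<alpha> \<alpha>']
      compose_aut_inv[OF \<alpha>] aut_inv_compose[OF \<alpha>] aut_isometry_id
    by simp_all
  show "aut_isometry \<alpha> s ` Zirr \<subseteq> Zirr" "aut_isometry (aut_inv \<alpha>) s ` Zirr \<subseteq> Zirr"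
    using aut_isometry_ZIrr[OF \<alpha>] aut_isometry_ZIrr[OF \<alpha>'] by blast+
qed

lemma aut_isometry_add:
  assumes "f \<in> Zirr" "f' \<in> Zirr"
  shows "aut_isometry \<alpha> s (\<lambda>x. f x + f' x) = (\<lambda>x. aut_isometry \<alpha> s f x + aut_isometry \<alpha> s f' x)"
  using assms ZIrr_add[OF assms]
  by (auto simp: aut_isometry_def grp_alg_eval_add_left algebra_simps)

lemma char_inner_aut_isometry:
  assumes \<alpha>: "\<alpha> \<in> alg_auts \<O> G" and s: "s \<in> {1, -1}" and f: "f \<in> Zirr" "f' \<in> Zirr"
  shows "char_inner G (aut_isometry \<alpha> s f) (aut_isometry \<alpha> s f') = char_inner G f f'"
proof -
  obtain a b where ab: "f = char_comb a" "f' = char_comb b" using f ZIrr_iff by blast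
  have perm: "inj_on (aut_char_perm \<alpha>) Irr" "aut_char_perm \<alpha> ` Irr \<subseteq> Irr"
    using aut_char_perm_bij[OF \<alpha>] by (auto simp: bij_betw_def)
  have "char_inner G (aut_isometry \<alpha> s f) (aut_isometry \<alpha> s f')
      = of_int (\<Sum>\<chi>\<in>Irr. (s * a \<chi>) * (s * b \<chi>))"
    unfolding ab aut_isometry_char_comb by (rule char_inner_permuted_comb[OF perm])
  also have "(\<Sum>\<chi>\<in>Irr. (s * a \<chi>) * (s * b \<chi>)) = (\<Sum>\<chi>\<in>Irr. a \<chi> * b \<chi>)"
    using s by (intro sum.cong refl) auto
  finally show ?thesis using char_inner_char_comb ab by simp
qed

lemma alg_aut_grp_elem_coeff_one:
  assumes \<alpha>: "\<alpha> \<in> alg_auts \<O> G" and g: "g \<in> carrier G" "g \<noteq> \<one>"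
  shows "\<alpha> (grp_elem g) \<one> = 0"
proof -
  have "of_nat n * \<alpha> (grp_elem g) \<one> = (\<Sum>\<chi>\<in>Irr. grp_alg_eval \<chi> (\<alpha> (grp_elem g)) * \<chi> (inv \<one>))"
    using fourier_inversion[OF one_closed] by simp
  also have "\<dots> = (\<Sum>\<chi>\<in>Irr. aut_char_perm \<alpha> \<chi> g)"
    using g by (intro sum.cong refl) (simp add: aut_char_perm_def lin_char_one)
  also have "\<dots> = (\<Sum>\<chi>\<in>Irr. \<chi> g)"
    using sum.reindex_bij_betw[OF aut_char_perm_bij[OF \<alpha>], of "\<lambda>\<chi>. \<chi> g"] by simp
  also have "\<dots> = 0" using sum_lin_chars g by simp
  finally show ?thesis using order_pos by simp
qed

lemma perfect_aut_isometry:
  assumes \<alpha>: "\<alpha> \<in> alg_auts \<O> G" and s: "s \<in> {1, -1}"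
  shows "perfect p \<O> G (mu_of G (aut_isometry \<alpha> s))"
  unfolding perfect_def
proof (intro conjI ballI impI)
  fix g h assume g: "g \<in> carrier G" and h: "h \<in> carrier G"
  have "of_int s \<in> \<O>" using s O_one O_uminus by auto
  moreover have "\<alpha> (grp_elem g) h \<in> \<O>"
    using alg_aut_grp_alg[OF \<alpha> grp_alg_grp_elem[OF g]] h by (simp add: grp_alg_iff)
  ultimately have "mu_of G (aut_isometry \<alpha> s) g h / of_nat n \<in> \<O>"
    using mu_of_aut_isometry[OF \<alpha> g h] order_pos O_mult by simp
  then show "mu_of G (aut_isometry \<alpha> s) g h / of_nat (card (centralizer_grp G g)) \<in> \<O>"
    "mu_of G (aut_isometry \<alpha> s) g h / of_nat (card (centralizer_grp G h)) \<in> \<O>"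
    using centralizer_eq_carrier g h by (simp_all add: Coset.order_def)
next
  fix g h assume g: "g \<in> carrier G" and h: "h \<in> carrier G"
    and "mu_of G (aut_isometry \<alpha> s) g h \<noteq> 0"
  then have nz: "\<alpha> (grp_elem g) h \<noteq> 0" using mu_of_aut_isometry[OF \<alpha> g h] by auto
  have "g = \<one> \<longleftrightarrow> h = \<one>"
  proof
    assume "g = \<one>"
    then have "\<alpha> (grp_elem g) = grp_elem \<one>" using alg_aut_one[OF \<alpha>] by (simp add: grp_alg_one_eq)
    then show "h = \<one>" using nz by (simp add: grp_elem_def split: if_splits)
  next
    assume "h = \<one>"
    then show "g = \<one>" using alg_aut_grp_elem_coeff_one[OF \<alpha> g] nz by blast
  qed
  then show "p_regular p G g \<longleftrightarrow> p_regular p G h" using p_regular_iff_one g h by simp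
qed

lemma aut_isometry_perf:
  assumes "\<alpha> \<in> alg_auts \<O> G" "s \<in> {1, -1}"
  shows "aut_isometry \<alpha> s \<in> perf_isometries p \<O> G"
  unfolding perf_isometries_def
  using aut_isometry_bij[OF assms] aut_isometry_add char_inner_aut_isometry[OF assms]
    perfect_aut_isometry[OF assms]
  by (auto simp: aut_isometry_def)

lemma aut_isometry_inject:
  assumes \<alpha>: "\<alpha> \<in> alg_auts \<O> G" and \<beta>: "\<beta> \<in> alg_auts \<O> G" and s: "s \<in> {1, -1}" and t: "t \<in> {1, -1}"
    and e: "aut_isometry \<alpha> s = aut_isometry \<beta> t"
  shows "\<alpha> = \<beta> \<and> s = t"
proof -
  have tz: "principal_char \<in> Zirr" using lin_char_ZIrr[OF principal_char_Irr] .
  have v: "aut_isometry \<gamma> u principal_char \<one> = of_int u" if \<gamma>: "\<gamma> \<in> alg_auts \<O> G" for \<gamma> u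
  proof -
    have a1: "\<gamma> (grp_elem \<one>) = grp_elem \<one>" using alg_aut_one[OF \<gamma>] by (simp add: grp_alg_one_eq)
    then show ?thesis
      using tz by (simp add: aut_isometry_def grp_alg_eval_grp_elem principal_char_def)
  qed
  have "(of_int s :: 'k) = of_int t" using v[OF \<alpha>, of s] v[OF \<beta>, of t] e by simp
  then have st: "s = t" by simp
  have s0: "(of_int s :: 'k) \<noteq> 0" using s by auto
  have "\<forall>g\<in>carrier G. \<alpha> (grp_elem g) = \<beta> (grp_elem g)"
  proof
    fix g assume g: "g \<in> carrier G"
    show "\<alpha> (grp_elem g) = \<beta> (grp_elem g)"
    proof (rule grp_alg_eval_inject)
      show "supported (\<alpha> (grp_elem g))" "supported (\<beta> (grp_elem g))"
        using alg_aut_grp_alg[OF \<alpha> grp_alg_grp_elem[OF g]]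
                  alg_aut_grp_alg[OF \<beta> grp_alg_grp_elem[OF g]] grp_alg_supported by auto
      show "\<forall>\<chi>\<in>Irr. grp_alg_eval \<chi> (\<alpha> (grp_elem g)) = grp_alg_eval \<chi> (\<beta> (grp_elem g))"
      proof
        fix \<chi> assume c: "\<chi> \<in> Irr"
        have "aut_isometry \<alpha> s \<chi> g = aut_isometry \<beta> t \<chi> g" using e by simp
        then have "of_int s * grp_alg_eval \<chi> (\<alpha> (grp_elem g))
                    = of_int s * grp_alg_eval \<chi> (\<beta> (grp_elem g))"
          using g c st by (simp add: aut_isometry_lin_char aut_char_perm_def)
        then show "grp_alg_eval \<chi> (\<alpha> (grp_elem g)) = grp_alg_eval \<chi> (\<beta> (grp_elem g))"
          using s0 by simp
      qed
    qed
  qed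
  then show ?thesis using alg_aut_eqI[OF \<alpha> \<beta>] st by blast
qed

context
  fixes I assumes I: "I \<in> perf_isometries p \<O> G"
begin

lemma perf_iso_ZIrr: "f \<in> Zirr \<Longrightarrow> I f \<in> Zirr"
  using I unfolding perf_isometries_def using bij_betwE by blast
lemma perf_iso_add: "f \<in> Zirr \<Longrightarrow> g \<in> Zirr \<Longrightarrow> I (\<lambda>x. f x + g x) = (\<lambda>x. I f x + I g x)"
  using I unfolding perf_isometries_def by blast
lemma perf_iso_inner: "f \<in> Zirr \<Longrightarrow> g \<in> Zirr \<Longrightarrow> char_inner G (I f) (I g) = char_inner G f g"
  using I unfolding perf_isometries_def by blast
lemma perf_iso_perfect: "perfect p \<O> G (mu_of G I)"
  using I unfolding perf_isometries_def by blast
lemma perf_iso_extensional: "I \<in> extensional Zirr"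
  using I unfolding perf_isometries_def by blast

lemma perf_iso_zero: "I (\<lambda>x. 0) = (\<lambda>x. 0)"
  using perf_iso_add[OF ZIrr_zero ZIrr_zero] by (simp add: fun_eq_iff)

lemma perf_iso_neg: assumes f: "f \<in> Zirr" shows "I (\<lambda>x. - f x) = (\<lambda>x. - I f x)"
proof -
  have "I (\<lambda>x. f x + (\<lambda>x. - f x) x) = (\<lambda>x. I f x + I (\<lambda>x. - f x) x)"
    using perf_iso_add[OF f ZIrr_neg[OF f]] .
  then have "(\<lambda>x. 0) = (\<lambda>x. I f x + I (\<lambda>x. - f x) x)" using perf_iso_zero by simp
  then have "\<And>x. 0 = I f x + I (\<lambda>x. - f x) x" by meson
  then have "\<And>x. I (\<lambda>x. - f x) x = - I f x" by (metis add_eq_0_iff)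
  then show ?thesis by auto
qed

lemma perf_iso_smult_nat:
  assumes f: "f \<in> Zirr"
  shows "I (\<lambda>x. of_nat k * f x) = (\<lambda>x. of_nat k * I f x)"
proof (induction k)
  case 0 then show ?case using perf_iso_zero by simp
next
  case (Suc k)
  have m: "(\<lambda>x. of_nat k * f x) \<in> Zirr" using ZIrr_smult[OF f, of "int k"] by simp
  have "I (\<lambda>x. of_nat (Suc k) * f x) = I (\<lambda>x. (\<lambda>x. of_nat k * f x) x + f x)"
    by (simp add: algebra_simps)
  also have "\<dots> = (\<lambda>x. I (\<lambda>x. of_nat k * f x) x + I f x)" by (rule perf_iso_add[OF m f])
  finally show ?case using Suc by (simp add: algebra_simps)
qed

lemma perf_iso_smult: assumes f: "f \<in> Zirr" shows "I (\<lambda>x. of_int k * f x) = (\<lambda>x. of_int k * I f x)"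
proof (cases "k \<ge> 0")
  case True
  define m where "m = nat k"
  have "k = int m" using True by (simp add: m_def)
  then show ?thesis using perf_iso_smult_nat[OF f, of m] by simp
next
  case False
  define m where "m = nat (- k)"
  have km: "k = - int m" using False by (simp add: m_def)
  have m: "(\<lambda>x. of_nat m * f x) \<in> Zirr" using ZIrr_smult[OF f, of "int m"] by simp
  have "I (\<lambda>x. of_int k * f x) = I (\<lambda>x. - (\<lambda>x. of_nat m * f x) x)" by (simp add: km)
  also have "\<dots> = (\<lambda>x. - I (\<lambda>x. of_nat m * f x) x)" by (rule perf_iso_neg[OF m])
  finally show ?thesis using perf_iso_smult_nat[OF f, of m] by (simp add: km)
qed

lemma perf_iso_subset_comb:
  assumes S: "S \<subseteq> Irr"
  shows "I (\<lambda>x. \<Sum>\<chi>\<in>S. of_int (a \<chi>) * \<chi> x) = (\<lambda>x. \<Sum>\<chi>\<in>S. of_int (a \<chi>) * I \<chi> x)"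
proof -
  have "finite S" using S finite_Irr finite_subset by blast
  then show ?thesis using S
  proof (induction S rule: finite_induct)
    case empty then show ?case using perf_iso_zero by simp
  next
    case (insert z F)
    have z: "z \<in> Irr" and F: "F \<subseteq> Irr" using insert by auto
    have m1: "(\<lambda>x. of_int (a z) * z x) \<in> Zirr" using ZIrr_smult[OF lin_char_ZIrr[OF z]] .
    have m2: "(\<lambda>x. \<Sum>\<chi>\<in>F. of_int (a \<chi>) * \<chi> x) \<in> Zirr" using subset_comb_ZIrr[OF F] .
    have "I (\<lambda>x. \<Sum>\<chi>\<in>insert z F. of_int (a \<chi>) * \<chi> x)
        = I (\<lambda>x. (\<lambda>x. of_int (a z) * z x) x + (\<lambda>x. \<Sum>\<chi>\<in>F. of_int (a \<chi>) * \<chi> x) x)"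
      using insert by simp
    also have "\<dots> = (\<lambda>x. I (\<lambda>x. of_int (a z) * z x) x + I (\<lambda>x. \<Sum>\<chi>\<in>F. of_int (a \<chi>) * \<chi> x) x)"
      by (rule perf_iso_add[OF m1 m2])
    also have "I (\<lambda>x. of_int (a z) * z x) = (\<lambda>x. of_int (a z) * I z x)"
      by (rule perf_iso_smult[OF lin_char_ZIrr[OF z]])
    also have "I (\<lambda>x. \<Sum>\<chi>\<in>F. of_int (a \<chi>) * \<chi> x) = (\<lambda>x. \<Sum>\<chi>\<in>F. of_int (a \<chi>) * I \<chi> x)"
      using insert F by blast
    finally show ?case using insert by simp
  qed
qed

lemma perf_iso_char_comb: "I (char_comb a) = (\<lambda>x. \<Sum>\<chi>\<in>Irr. of_int (a \<chi>) * I \<chi> x)"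
  unfolding char_comb_def by (rule perf_iso_subset_comb) simp

definition iso_sign where "iso_sign \<chi> = I \<chi> \<one>"
definition iso_perm where "iso_perm \<chi> = (\<lambda>x. iso_sign \<chi> * I \<chi> x)"

lemma perf_iso_lin_char:
  assumes c: "\<chi> \<in> Irr"
  shows "(iso_sign \<chi> = 1 \<or> iso_sign \<chi> = -1) \<and> iso_perm \<chi> \<in> Irr
      \<and> I \<chi> = (\<lambda>x. iso_sign \<chi> * iso_perm \<chi> x)"
proof -
  have "char_inner G (I \<chi>) (I \<chi>) = 1"
    using perf_iso_inner[OF lin_char_ZIrr[OF c] lin_char_ZIrr[OF c]] char_inner_lin_chars[OF c c]
    by simp
  then obtain \<psi> where \<psi>: "\<psi> \<in> Irr" "I \<chi> = \<psi> \<or> I \<chi> = (\<lambda>x. - \<psi> x)"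
    using ZIrr_norm_one perf_iso_ZIrr[OF lin_char_ZIrr[OF c]] by blast
  then show ?thesis
  proof (elim disjE)
    assume e: "I \<chi> = \<psi>"
    then have "iso_sign \<chi> = 1" using lin_char_one[OF \<psi>(1)] by (simp add: iso_sign_def)
    then show ?thesis using e \<psi>(1) by (simp add: iso_perm_def)
  next
    assume e: "I \<chi> = (\<lambda>x. - \<psi> x)"
    then have "iso_sign \<chi> = -1" using lin_char_one[OF \<psi>(1)] by (simp add: iso_sign_def)
    then show ?thesis using e \<psi>(1) by (simp add: iso_perm_def)
  qed
qed

lemma iso_perm_bij: "bij_betw iso_perm Irr Irr"
proof -
  have inj: "inj_on iso_perm Irr"
  proof (rule inj_onI)
    fix \<chi> \<chi>' assume c: "\<chi> \<in> Irr" and c': "\<chi>' \<in> Irr" and e: "iso_perm \<chi> = iso_perm \<chi>'"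
    have "char_inner G (I \<chi>) (I \<chi>')
            = iso_sign \<chi> * iso_sign \<chi>' * char_inner G (iso_perm \<chi>) (iso_perm \<chi>')"
      using perf_iso_lin_char[OF c] perf_iso_lin_char[OF c'] char_inner_scale by metis
    also have "\<dots> = iso_sign \<chi> * iso_sign \<chi>'"
      using e char_inner_lin_chars perf_iso_lin_char[OF c'] by simp
    finally have "char_inner G \<chi> \<chi>' \<noteq> 0"
      using perf_iso_inner[OF lin_char_ZIrr[OF c] lin_char_ZIrr[OF c']]
              perf_iso_lin_char[OF c] perf_iso_lin_char[OF c'] by auto
    then show "\<chi> = \<chi>'" using char_inner_lin_chars[OF c c'] by (simp split: if_splits)
  qed
  moreover have "iso_perm ` Irr \<subseteq> Irr" using perf_iso_lin_char by blast
  ultimately show ?thesis using finite_Irr by (simp add: bij_betw_def endo_inj_surj)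
qed

lemma mu_of_perf_iso:
  "g \<in> carrier G
    \<Longrightarrow> mu_of G I g h = (\<Sum>\<chi>\<in>Irr. iso_sign \<chi> * iso_perm \<chi> g * \<chi> (inv h))"
  unfolding mu_of_def by (intro sum.cong refl) (metis perf_iso_lin_char mult.assoc)

lemma mu_of_perf_iso_one:
  assumes "h \<in> carrier G" "h \<noteq> \<one>"
  shows "mu_of G I \<one> h = 0"
proof (rule ccontr)
  assume "mu_of G I \<one> h \<noteq> 0"
  then have "p_regular p G \<one> \<longleftrightarrow> p_regular p G h"
    using perf_iso_perfect assms by (simp add: perfect_def)
  then show False using p_regular_iff_one assms by simp
qed

text \<open>Evaluating \<open>\<Sum>\<^sub>h \<mu>(1, h) \<phi>(h)\<close> once via \<open>mu_of_perf_iso_one\<close> and once via orthogonality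
  gives \<open>|G| \<cdot> iso_sign \<phi> = \<Sum>\<^sub>\<chi> iso_sign \<chi>\<close> for every \<open>\<phi>\<close>.\<close>

lemma iso_sign_const:
  assumes c: "\<psi> \<in> Irr"
  shows "iso_sign \<psi> = iso_sign principal_char"
proof -
  have sg1: "iso_perm \<chi> \<one> = 1" if "\<chi> \<in> Irr" for \<chi>
    using perf_iso_lin_char[OF that] lin_char_one by blast
  have mu1: "mu_of G I \<one> h = (\<Sum>\<chi>\<in>Irr. iso_sign \<chi> * \<chi> (inv h))" for h
    using mu_of_perf_iso[of \<one> h] sg1 by simp
  have key: "of_nat n * iso_sign \<phi> = (\<Sum>\<chi>\<in>Irr. iso_sign \<chi>)" if d: "\<phi> \<in> Irr" for \<phi>
  proof -
    have "(\<Sum>h\<in>carrier G. mu_of G I \<one> h * \<phi> h)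
            = (\<Sum>h\<in>carrier G. if h = \<one> then mu_of G I \<one> h * \<phi> h else 0)"
      using mu_of_perf_iso_one by (intro sum.cong refl) auto
    also have "\<dots> = (\<Sum>\<chi>\<in>Irr. iso_sign \<chi>)"
      using finite_carrier mu1[of \<one>] lin_char_one[OF d] by (simp add: lin_char_one)
    finally have A: "(\<Sum>h\<in>carrier G. mu_of G I \<one> h * \<phi> h) = (\<Sum>\<chi>\<in>Irr. iso_sign \<chi>)" .
    have "(\<Sum>h\<in>carrier G. mu_of G I \<one> h * \<phi> h)
            = (\<Sum>h\<in>carrier G. \<Sum>\<chi>\<in>Irr. iso_sign \<chi> * (\<phi> h * \<chi> (inv h)))"
      by (simp add: mu1 sum_distrib_right sum_distrib_left mult_ac)
    also have "\<dots> = (\<Sum>\<chi>\<in>Irr. \<Sum>h\<in>carrier G. iso_sign \<chi> * (\<phi> h * \<chi> (inv h)))" by (rule sum.swap)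
    also have "\<dots> = (\<Sum>\<chi>\<in>Irr. iso_sign \<chi> * (if \<phi> = \<chi> then of_nat n else 0))"
      by (intro sum.cong refl) (simp add: sum_distrib_left[symmetric] lin_chars_orthogonality[OF d])
    also have "\<dots> = (\<Sum>\<chi>\<in>Irr. if \<phi> = \<chi> then iso_sign \<chi> * of_nat n else 0)"
      by (intro sum.cong refl) auto
    also have "\<dots> = iso_sign \<phi> * of_nat n" using d finite_Irr by simp
    finally show ?thesis using A by (simp add: mult.commute)
  qed
  have "of_nat n * iso_sign \<psi> = of_nat n * iso_sign principal_char"
    using key[OF c] key[OF principal_char_Irr] by simp
  then show ?thesis using order_pos by simp
qed

lemma perf_iso_lin_char_eq: "\<chi> \<in> Irr \<Longrightarrow> I \<chi> = (\<lambda>x. iso_sign principal_char * iso_perm \<chi> x)"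
  using perf_iso_lin_char iso_sign_const by metis

lemma iso_sign_cases: "iso_sign principal_char = 1 \<or> iso_sign principal_char = -1"
  using perf_iso_lin_char[OF principal_char_Irr] by blast

text \<open>The integrality half of perfectness, \<open>\<mu>(g, h) / |G| \<in> \<O>\<close>, says that the coefficients of the
  automorphism dual to \<open>iso_perm\<close> lie in \<open>\<O>\<close>.\<close>

lemma integral_iso_perm: "integral_char_perm iso_perm"
  unfolding integral_char_perm_def
proof (intro ballI)
  fix g h assume g: "g \<in> carrier G" and h: "h \<in> carrier G"
  have mu: "mu_of G I g h = iso_sign principal_char * (\<Sum>\<chi>\<in>Irr. iso_perm \<chi> g * \<chi> (inv h))"
    unfolding mu_of_def by (simp add: perf_iso_lin_char_eq sum_distrib_left mult.assoc)
  have "mu_of G I g h / of_nat (card (centralizer_grp G g)) \<in> \<O>"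
    using perf_iso_perfect g h by (simp add: perfect_def)
  then have m: "mu_of G I g h / of_nat n \<in> \<O>"
    using centralizer_eq_carrier[OF g] by (simp add: Coset.order_def)
  have "char_perm_elem iso_perm g h = iso_sign principal_char * (mu_of G I g h / of_nat n)"
    using h iso_sign_cases by (auto simp: char_perm_elem_def mu)
  moreover have "iso_sign principal_char \<in> \<O>" using iso_sign_cases O_one O_uminus by auto
  then have "iso_sign principal_char * (mu_of G I g h / of_nat n) \<in> \<O>" using O_mult m by blast
  ultimately show "char_perm_elem iso_perm g h \<in> \<O>" by simp
qed

lemma aut_char_perm_iso_perm: "\<chi> \<in> Irr \<Longrightarrow> aut_char_perm (char_perm_aut iso_perm) \<chi> = iso_perm \<chi>"
proof
  fix g assume c: "\<chi> \<in> Irr"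
  have sc: "iso_perm \<chi> \<in> Irr" using perf_iso_lin_char[OF c] by blast
  show "aut_char_perm (char_perm_aut iso_perm) \<chi> g = iso_perm \<chi> g"
    using grp_alg_eval_char_perm_aut[OF iso_perm_bij c grp_alg_grp_elem[of g]]
      grp_alg_eval_grp_elem[of g] lin_char_outside[OF sc]
    by (auto simp: aut_char_perm_def)
qed

lemma perf_iso_decomp:
  assumes s: "of_int s = iso_sign principal_char"
  shows "I = aut_isometry (char_perm_aut iso_perm) s"
proof (rule extensionalityI[where A = Zirr])
  show "I \<in> extensional Zirr" by (rule perf_iso_extensional)
  show "aut_isometry (char_perm_aut iso_perm) s \<in> extensional Zirr" by (simp add: aut_isometry_def)
  fix f assume "f \<in> Zirr"
  then obtain a where fa: "f = char_comb a" using ZIrr_iff by blast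
  have "I f = (\<lambda>x. \<Sum>\<chi>\<in>Irr. of_int (a \<chi>) * (iso_sign principal_char * iso_perm \<chi> x))"
    using perf_iso_char_comb fa perf_iso_lin_char_eq by simp
  also have "\<dots> = (\<lambda>x. \<Sum>\<chi>\<in>Irr. of_int (s * a \<chi>) * aut_char_perm (char_perm_aut iso_perm) \<chi> x)"
    using s by (intro ext sum.cong refl) (simp add: aut_char_perm_iso_perm)
  also have "\<dots> = aut_isometry (char_perm_aut iso_perm) s f" using aut_isometry_char_comb fa by simp
  finally show "I f = aut_isometry (char_perm_aut iso_perm) s f" .
qed

end

end

lemma group_C2: "group C2"
proof (rule groupI)
  show "\<exists>y\<in>carrier C2. y \<otimes>\<^bsub>C2\<^esub> x = \<one>\<^bsub>C2\<^esub>" if "x \<in> carrier C2" for x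
    using that by (intro bexI[of _ x]) (auto simp: C2_def)
qed (auto simp: C2_def)

context abelian_p_group_algebra
begin

abbreviation Aut where "Aut \<equiv> (Aut_alg \<O> G :: (('g \<Rightarrow> 'k) \<Rightarrow> ('g \<Rightarrow> 'k)) monoid)"

text \<open>\<open>aut_isometry\<close> is contravariant in \<open>\<alpha>\<close> (\<open>aut_isometry_compose\<close>), hence the inverse.\<close>

definition perf_of :: "(('g \<Rightarrow> 'k) \<Rightarrow> ('g \<Rightarrow> 'k)) \<times> int \<Rightarrow> ('g \<Rightarrow> 'k) \<Rightarrow> ('g \<Rightarrow> 'k)" where
  "perf_of x = aut_isometry (inv\<^bsub>Aut\<^esub> (fst x)) (snd x)"

lemma carrier_Aut: "carrier Aut = alg_auts \<O> G"
  by (simp add: Aut_alg_def)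

lemma Aut_inv_alg_auts: "\<phi> \<in> alg_auts \<O> G \<Longrightarrow> inv\<^bsub>Aut\<^esub> \<phi> \<in> alg_auts \<O> G"
  using group.inv_closed[OF group_Aut_alg] by (simp add: carrier_Aut)

lemma Aut_inv_inv: "\<phi> \<in> alg_auts \<O> G \<Longrightarrow> inv\<^bsub>Aut\<^esub> (inv\<^bsub>Aut\<^esub> \<phi>) = \<phi>"
  using group.inv_inv[OF group_Aut_alg] by (simp add: carrier_Aut)

lemma carrier_Aut_C2: "carrier (Aut \<times>\<times> C2) = alg_auts \<O> G \<times> {1, -1}"
  by (simp add: carrier_Aut C2_def DirProd_def)

lemma perf_of_hom: "perf_of \<in> hom (Aut \<times>\<times> C2) (Perf p \<O> G)"
proof (rule homI)
  fix x assume "x \<in> carrier (Aut \<times>\<times> C2)"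
  then show "perf_of x \<in> carrier (Perf p \<O> G)"
    using Aut_inv_alg_auts aut_isometry_perf unfolding carrier_Aut_C2
    by (auto simp: perf_of_def Perf_def)
next
  fix x y assume "x \<in> carrier (Aut \<times>\<times> C2)" "y \<in> carrier (Aut \<times>\<times> C2)"
  then obtain \<phi> s \<psi> t where xy: "x = (\<phi>, s)" "y = (\<psi>, t)" and \<phi>: "\<phi> \<in> alg_auts \<O> G"
      and \<psi>: "\<psi> \<in> alg_auts \<O> G"
    unfolding carrier_Aut_C2 by blast
  have "x \<otimes>\<^bsub>Aut \<times>\<times> C2\<^esub> y = (compose OG \<phi> \<psi>, s * t)"
    by (simp add: xy Aut_alg_def C2_def)
  moreover have "inv\<^bsub>Aut\<^esub> (compose OG \<phi> \<psi>) = compose OG (inv\<^bsub>Aut\<^esub> \<psi>) (inv\<^bsub>Aut\<^esub> \<phi>)"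
    using group.inv_mult_group[OF group_Aut_alg, of \<phi> \<psi>] \<phi> \<psi> by (simp add: Aut_alg_def)
  moreover have "perf_of x \<otimes>\<^bsub>Perf p \<O> G\<^esub> perf_of y
      = restrict (\<lambda>f. aut_isometry (inv\<^bsub>Aut\<^esub> \<phi>) s (aut_isometry (inv\<^bsub>Aut\<^esub> \<psi>) t f)) Zirr"
    by (simp add: Perf_def perf_of_def xy compose_def)
  moreover have "\<dots> = restrict (aut_isometry (compose OG (inv\<^bsub>Aut\<^esub> \<psi>) (inv\<^bsub>Aut\<^esub> \<phi>)) (s * t)) Zirr"
    using aut_isometry_compose[OF Aut_inv_alg_auts[OF \<phi>] Aut_inv_alg_auts[OF \<psi>]]
    by (intro restrict_ext) simp
  ultimately show "perf_of (x \<otimes>\<^bsub>Aut \<times>\<times> C2\<^esub> y) = perf_of x \<otimes>\<^bsub>Perf p \<O> G\<^esub> perf_of y"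
    by (simp add: perf_of_def aut_isometry_def)
qed

lemma perf_of_inj: "inj_on perf_of (carrier (Aut \<times>\<times> C2))"
proof (rule inj_onI)
  fix x y assume "x \<in> carrier (Aut \<times>\<times> C2)" "y \<in> carrier (Aut \<times>\<times> C2)"
    and eq: "perf_of x = perf_of y"
  then obtain \<phi> s \<psi> t where xy: "x = (\<phi>, s)" "y = (\<psi>, t)" and \<phi>: "\<phi> \<in> alg_auts \<O> G"
      and \<psi>: "\<psi> \<in> alg_auts \<O> G" and st: "s \<in> {1, -1}" "t \<in> {1, -1}"
    unfolding carrier_Aut_C2 by blast
  have "inv\<^bsub>Aut\<^esub> \<phi> = inv\<^bsub>Aut\<^esub> \<psi> \<and> s = t"
    using aut_isometry_inject[OF Aut_inv_alg_auts[OF \<phi>] Aut_inv_alg_auts[OF \<psi>] st] eq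
    by (simp add: perf_of_def xy)
  then show "x = y" using Aut_inv_inv[OF \<phi>] Aut_inv_inv[OF \<psi>] xy by metis
qed

lemma perf_of_surj: "perf_of ` carrier (Aut \<times>\<times> C2) = carrier (Perf p \<O> G)"
proof
  show "perf_of ` carrier (Aut \<times>\<times> C2) \<subseteq> carrier (Perf p \<O> G)"
    by (rule hom_carrier[OF perf_of_hom])
next
  show "carrier (Perf p \<O> G) \<subseteq> perf_of ` carrier (Aut \<times>\<times> C2)"
  proof
    fix I assume "I \<in> carrier (Perf p \<O> G)"
    then have I: "I \<in> perf_isometries p \<O> G" by (simp add: Perf_def)
    define s :: int where "s = (if iso_sign I principal_char = 1 then 1 else -1)"
    have s: "of_int s = iso_sign I principal_char" "s \<in> {1, -1}"
      using iso_sign_cases[OF I] by (auto simp: s_def)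
    define \<phi> where "\<phi> = char_perm_aut (iso_perm I)"
    have \<phi>: "\<phi> \<in> alg_auts \<O> G"
      unfolding \<phi>_def using char_perm_aut_alg_auts[OF iso_perm_bij[OF I] integral_iso_perm[OF I]] .
    have "I = aut_isometry \<phi> s" unfolding \<phi>_def by (rule perf_iso_decomp[OF I s(1)])
    then have "I = perf_of (inv\<^bsub>Aut\<^esub> \<phi>, s)" by (simp add: perf_of_def Aut_inv_inv[OF \<phi>])
    moreover have "(inv\<^bsub>Aut\<^esub> \<phi>, s) \<in> carrier (Aut \<times>\<times> C2)"
      using Aut_inv_alg_auts[OF \<phi>] s(2) unfolding carrier_Aut_C2 by blast
    ultimately show "I \<in> perf_of ` carrier (Aut \<times>\<times> C2)" by blast
  qed
qed

theorem Perf_iso_Aut_times_C2: "Perf p \<O> G \<cong> Aut \<times>\<times> C2"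
proof -
  have "perf_of \<in> iso (Aut \<times>\<times> C2) (Perf p \<O> G)"
    using perf_of_hom perf_of_inj perf_of_surj by (auto simp: iso_def bij_betw_def)
  then have "Aut \<times>\<times> C2 \<cong> Perf p \<O> G" by (rule is_isoI)
  then show ?thesis using group.iso_sym DirProd_group[OF group_Aut_alg group_C2] by blast
qed

end

lemma p_modular_system_valuation_ring:
  assumes "p_modular_system p v \<O>"
  shows "0 \<in> \<O>" "1 \<in> \<O>" "x \<in> \<O> \<Longrightarrow> y \<in> \<O> \<Longrightarrow> x + y \<in> \<O>"
    "x \<in> \<O> \<Longrightarrow> y \<in> \<O> \<Longrightarrow> x * y \<in> \<O>" "x \<in> \<O> \<Longrightarrow> - x \<in> \<O>"
proof -
  have v_mult: "x \<noteq> 0 \<Longrightarrow> y \<noteq> 0 \<Longrightarrow> v (x * y) = v x + v y" for x y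
    using assms by (simp add: p_modular_system_def)
  have v_add: "x \<noteq> 0 \<Longrightarrow> y \<noteq> 0 \<Longrightarrow> x + y \<noteq> 0 \<Longrightarrow> v (x + y) \<ge> min (v x) (v y)" for x y
    using assms by (simp add: p_modular_system_def)
  have O_def: "\<O> = {x. x = 0 \<or> v x \<ge> 0}" using assms by (simp add: p_modular_system_def)
  have "v 1 = 0" using v_mult[of 1 1] by simp
  moreover have "v (-1) = 0" using v_mult[of "-1" "-1"] \<open>v 1 = 0\<close> by simp
  ultimately show "0 \<in> \<O>" "1 \<in> \<O>" by (simp_all add: O_def)
  have minus_one: "-1 \<in> \<O>" using \<open>v (-1) = 0\<close> by (simp add: O_def)
  show mult: "x * y \<in> \<O>" if "x \<in> \<O>" "y \<in> \<O>" for x y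
    using that v_mult[of x y] by (cases "x = 0 \<or> y = 0") (auto simp: O_def)
  show "x + y \<in> \<O>" if "x \<in> \<O>" "y \<in> \<O>" for x y
    using that v_add[of x y] by (cases "x = 0 \<or> y = 0 \<or> x + y = 0") (auto simp: O_def)
  show "- x \<in> \<O>" if "x \<in> \<O>" for x
    using mult[OF minus_one that] by simp
qed

theorem lemma3p2:
  fixes p :: nat and v :: "'k::field_char_0 \<Rightarrow> int" and \<O> :: "'k set"
    and P :: "('g, 'b) monoid_scheme"
  assumes "p_modular_system p v \<O>"
    and "comm_group P" and "finite (carrier P)" and "\<exists>n. order P = p ^ n"
    and "\<exists>\<zeta>::'k. \<zeta> ^ order P = 1 \<and> (\<forall>k. 0 < k \<longrightarrow> k < order P \<longrightarrow> \<zeta> ^ k \<noteq> 1)"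
  shows "Perf p \<O> P \<cong> Aut_alg \<O> P \<times>\<times> C2"
proof -
  obtain N where "order P = p ^ N" using assms(4) by blast
  moreover obtain \<zeta> :: 'k where "\<zeta> ^ order P = 1" "\<forall>k. 0 < k \<longrightarrow> k < order P \<longrightarrow> \<zeta> ^ k \<noteq> 1"
    using assms(5) by blast
  moreover have "Factorial_Ring.prime p" using assms(1) by (simp add: p_modular_system_def)
  ultimately have "split_abelian_p_group P p N \<zeta>"
    using assms(2,3) by (intro split_abelian_p_group.intro split_abelian_p_group_axioms.intro)
  then interpret abelian_p_group_algebra P p N \<zeta> \<O>
    using p_modular_system_valuation_ring[OF assms(1)]
    by (intro abelian_p_group_algebra.intro abelian_p_group_algebra_axioms.intro)
  show ?thesis by (rule Perf_iso_Aut_times_C2)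
qed

end
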